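(* Let $U$ be the unipotent radical of a Borel subgroup of ${\mathrm{SO}}(4)$. Then \[\mathrm{H}(\mathcal{O}(\mathcal{C}({\mathrm{SO}}(4)))^{U\times U};t)=\frac{1+t^2}{(1-t)(1-t^2)^2}.\]
   Context: ${\mathrm{SO}}(4)=\{M\in\mathbb{C}^{4\times4}\mid M^TM=I,\ \det M=1\}$. The cone $\mathcal{C}({\mathrm{SO}}(4))$ is the Zariski closure in $\mathbb{C}^{4\times4}$ of $\{cM\mid c\in\mathbb{C},M\in{\mathrm{SO}}(4)\}$, with coordinate ring graded as a quotient of the standard graded polynomial ring by the homogeneous vanishing ideal. ${\mathrm{SO}}(4)\times{\mathrm{SO}}(4)$ acts by $(g,h)\cdot M=gMh^{-1}$, hence on the coordinate ring; $A^{U\times U}$ denotes the graded subalgebra of $U\times U$-invariants. The Hilbert series of $A=\bigoplus_dA_d$ is $\sum_d\dim_{\mathbb{C}}(A_d)t^d$. *)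

theory Defs
  imports "HOL-Analysis.Analysis" "HOL-Computational_Algebra.Formal_Power_Series" "HOL-Library.Function_Algebras"
begin

type_synonym cmat4 = "complex ^ 4 ^ 4"

definition SO4 :: "cmat4 set" where
  "SO4 = {M. transpose M ** M = mat 1 \<and> det M = 1}"

text \<open>The set {cM | c complex, M in SO(4)}; its Zariski closure is the cone C(SO(4)).
  Polynomials vanish on the closure iff they vanish on this set.\<close>
definition cone_SO4 :: "cmat4 set" where
  "cone_SO4 = {(\<chi> i j. c * M $ i $ j) | c M. M \<in> SO4}"

definition fscale :: "complex \<Rightarrow> (cmat4 \<Rightarrow> complex) \<Rightarrow> (cmat4 \<Rightarrow> complex)" where
  "fscale c f = (\<lambda>M. c * f M)"

definition monomials :: "nat \<Rightarrow> (cmat4 \<Rightarrow> complex) set" where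
  "monomials d = {(\<lambda>M. \<Prod>i\<in>UNIV. \<Prod>j\<in>UNIV. (M $ i $ j) ^ (e i j)) | e :: 4 \<Rightarrow> 4 \<Rightarrow> nat.
                    (\<Sum>i\<in>UNIV. \<Sum>j\<in>UNIV. e i j) = d}"

definition hom_polys :: "nat \<Rightarrow> (cmat4 \<Rightarrow> complex) set" where
  "hom_polys d = module.span fscale (monomials d)"

text \<open>Degree d part of the coordinate ring of the cone: homogeneous degree-d
  polynomials modulo those vanishing on the cone, realised as their restrictions
  to the cone (functions set to 0 outside).\<close>
definition coord_ring_deg :: "nat \<Rightarrow> (cmat4 \<Rightarrow> complex) set" where
  "coord_ring_deg d = (\<lambda>p M. if M \<in> cone_SO4 then p M else 0) ` hom_polys d"

text \<open>Indices of type 4 are 0 < 1 < 2 < 3. Change of basis P with P^T P = 2 * antidiag(1,1,1,1); conjugating by P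
  carries SO(4) to the orthogonal group of an antidiagonal form, whose upper
  triangular elements form a Borel subgroup.\<close>
definition Pmat :: cmat4 where
  "Pmat = (\<chi> i j.
     if i = 0 then (if j = 0 \<or> j = 3 then 1 else 0)
     else if i = 1 then (if j = 0 then \<i> else if j = 3 then - \<i> else 0)
     else if i = 2 then (if j = 1 \<or> j = 2 then 1 else 0)
     else (if j = 1 then \<i> else if j = 2 then - \<i> else 0))"

definition upper_unitriangular :: "cmat4 \<Rightarrow> bool" where
  "upper_unitriangular h \<longleftrightarrow> (\<forall>i j. (j < i \<longrightarrow> h $ i $ j = 0) \<and> h $ i $ i = 1)"

definition U_SO4 :: "cmat4 set" where
  "U_SO4 = {g \<in> SO4. \<exists>h. upper_unitriangular h \<and> g ** Pmat = Pmat ** h}"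

definition inv_deg :: "nat \<Rightarrow> (cmat4 \<Rightarrow> complex) set" where
  "inv_deg d = {f \<in> coord_ring_deg d.
      \<forall>g\<in>U_SO4. \<forall>h\<in>U_SO4. \<forall>M\<in>cone_SO4. f (g ** M ** matrix_inv h) = f M}"

definition hilbert_series_inv :: "rat fps" where
  "hilbert_series_inv = Abs_fps (\<lambda>d. of_nat (vector_space.dim fscale (inv_deg d)))"

end

theory Submission
  imports Defs
begin

text \<open>
  Conjugation by Pmat turns SO(4) into the special orthogonal group SO(J) of the antidiagonal
  form J, and U into the group of upper unitriangular matrices upper_unip a b. Two-sided
  multiplication by U brings every N in SO(J) with N$3$0 \<noteq> 0 to an antidiagonal normal form,
  and every such normal form is attained on the slice of lower unitriangular matrices
  lower_unip a b. The functions x, y, z (the corner entry and two corner minors in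
  J-coordinates) and q = tr(M^T M)/4 are U x U-invariant on the cone and restrict to
  a b, b^2, a^2 and 1 on the slice.

  Hence an invariant of degree d is determined by its restriction to the slice, a polynomial
  in a and b of degree at most d in each variable. The reflections a \<mapsto> -a and b \<mapsto> -b of the
  slice are realised by U x U up to the sign M \<mapsto> -M, so only monomials a^n b^m with
  n, m \<le> d and n \<equiv> m \<equiv> d (mod 2) occur, and each of them is the restriction of a monomial in
  x, y, z, q. These monomials therefore form a basis of the degree d invariants, whose
  dimension is (\<lfloor>d/2\<rfloor> + 1)^2, and the generating function of these numbers is
  (1 + t^2) / ((1 - t) (1 - t^2)^2).
\<close>

section \<open>Polynomial functions of two variables\<close>

text \<open>In poly2 Q a b, Q is a polynomial in a whose coefficients are polynomials in b.\<close>
definition poly2 :: "'a::comm_semiring_1 poly poly \<Rightarrow> 'a \<Rightarrow> 'a \<Rightarrow> 'a" where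
  "poly2 Q a b = poly (poly Q [:a:]) b"

definition bidegree_le :: "'a::zero poly poly \<Rightarrow> nat \<Rightarrow> bool" where
  "bidegree_le Q D \<longleftrightarrow> degree Q \<le> D \<and> (\<forall>n. degree (coeff Q n) \<le> D)"

lemma poly2_add: "poly2 (P + Q) a b = poly2 P a b + poly2 Q a b"
  by (simp add: poly2_def)

lemma poly2_mult: "poly2 (P * Q) a b = poly2 P a b * poly2 Q a b"
  by (simp add: poly2_def)

lemma poly2_power: "poly2 (Q ^ k) a b = poly2 Q a b ^ k"
  by (simp add: poly2_def)

lemma poly2_smult: "poly2 (smult [:c:] Q) a b = c * poly2 Q a b"
  by (simp add: poly2_def)

lemma poly2_biaffine:
  "poly2 [:[:\<alpha>, \<gamma>:], [:\<beta>, \<delta>:]:] a b = \<alpha> + \<beta> * a + \<gamma> * b + \<delta> * a * b"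
  by (simp add: poly2_def algebra_simps)

lemma poly2_prod: "poly2 (prod f S) a b = (\<Prod>i\<in>S. poly2 (f i) a b)"
  by (simp add: poly2_def poly_prod)

lemma bidegree_le_0: "bidegree_le 0 D"
  by (simp add: bidegree_le_def)

lemma bidegree_le_1: "bidegree_le 1 0"
  by (simp add: bidegree_le_def)

lemma bidegree_le_const: "bidegree_le [:[:c:]:] 0"
  by (simp add: bidegree_le_def coeff_pCons split: nat.split)

lemma bidegree_le_biaffine: "bidegree_le [:[:\<alpha>, \<gamma>:], [:\<beta>, \<delta>:]:] 1"
  unfolding bidegree_le_def by (auto simp: coeff_pCons degree_pCons_le split: nat.split)

lemma bidegree_le_add: "bidegree_le P D \<Longrightarrow> bidegree_le Q D \<Longrightarrow> bidegree_le (P + Q) D"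
  unfolding bidegree_le_def by (auto intro: order.trans[OF degree_add_le_max])

lemma bidegree_le_mult:
  assumes "bidegree_le P D1" and "bidegree_le Q D2"
  shows "bidegree_le (P * Q) (D1 + D2)"
  unfolding bidegree_le_def
proof (intro conjI allI)
  show "degree (P * Q) \<le> D1 + D2"
    using assms unfolding bidegree_le_def by (meson add_mono degree_mult_le order.trans)
  fix n
  show "degree (coeff (P * Q) n) \<le> D1 + D2"
    unfolding coeff_mult
  proof (rule degree_sum_le)
    fix i
    show "degree (coeff P i * coeff Q (n - i)) \<le> D1 + D2"
      using assms unfolding bidegree_le_def by (meson add_mono degree_mult_le order.trans)
  qed simp
qed

lemma bidegree_le_prod:
  "finite S \<Longrightarrow> (\<And>i. i \<in> S \<Longrightarrow> bidegree_le (f i) (D i)) \<Longrightarrow> bidegree_le (prod f S) (sum D S)"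
  by (induct S rule: finite_induct) (simp_all add: bidegree_le_1 bidegree_le_mult)

lemma bidegree_le_power: "bidegree_le Q D \<Longrightarrow> bidegree_le (Q ^ k) (k * D)"
  by (induct k) (simp_all add: bidegree_le_1 bidegree_le_mult)

lemma bidegree_le_coeff_eq_0:
  assumes "bidegree_le Q D" and "D < n \<or> D < m"
  shows "coeff (coeff Q n) m = 0"
  using assms(2)
proof
  assume "D < n"
  moreover have "degree Q \<le> D"
    using assms(1) by (simp add: bidegree_le_def)
  ultimately show ?thesis
    by (simp add: coeff_eq_0)
next
  assume "D < m"
  moreover have "degree (coeff Q n) \<le> D"
    using assms(1) by (simp add: bidegree_le_def)
  ultimately show ?thesis
    by (simp add: coeff_eq_0)
qed

definition biaffine :: "('a::comm_ring_1 \<Rightarrow> 'a \<Rightarrow> 'a) \<Rightarrow> bool" where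
  "biaffine g \<longleftrightarrow> (\<exists>Q. bidegree_le Q 1 \<and> (\<forall>a b. g a b = poly2 Q a b))"

lemma biaffineI: "biaffine (\<lambda>a b. \<alpha> + \<beta> * a + \<gamma> * b + \<delta> * a * b)"
  unfolding biaffine_def using bidegree_le_biaffine poly2_biaffine by metis

lemma biaffine_add: "biaffine f \<Longrightarrow> biaffine g \<Longrightarrow> biaffine (\<lambda>a b. f a b + g a b)"
  unfolding biaffine_def by (metis bidegree_le_add poly2_add)

lemma biaffine_cmult: "biaffine f \<Longrightarrow> biaffine (\<lambda>a b. c * f a b)"
proof -
  assume "biaffine f"
  then obtain Q where Q: "bidegree_le Q 1" "\<forall>a b. f a b = poly2 Q a b"
    unfolding biaffine_def by blast
  have "bidegree_le ([:[:c:]:] * Q) (0 + 1)"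
    by (rule bidegree_le_mult[OF bidegree_le_const Q(1)])
  moreover have "c * f a b = poly2 ([:[:c:]:] * Q) a b" for a b
    using Q(2) by (simp add: poly2_smult)
  ultimately show ?thesis
    unfolding biaffine_def by auto
qed

lemma biaffine_sum: "(\<And>i. i \<in> S \<Longrightarrow> biaffine (f i)) \<Longrightarrow> biaffine (\<lambda>a b. \<Sum>i\<in>S. f i a b)"
proof (induct S rule: infinite_finite_induct)
  case (insert x F)
  then show ?case
    by (simp add: biaffine_add)
qed (use biaffineI[of 0 0 0 0] in simp_all)

lemma biaffine_basic:
  "biaffine (\<lambda>a b. c)" "biaffine (\<lambda>a b. a)" "biaffine (\<lambda>a b. b)"
  "biaffine (\<lambda>a b. - a)" "biaffine (\<lambda>a b. - b)" "biaffine (\<lambda>a b. - (a * b))"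
  using biaffineI[of c 0 0 0] biaffineI[of 0 1 0 0] biaffineI[of 0 0 1 0]
    biaffineI[of 0 "-1" 0 0] biaffineI[of 0 0 "-1" 0] biaffineI[of 0 0 0 "-1"]
  by (simp_all add: mult.assoc)

lemma poly_eq_sum_coeff_le:
  fixes p :: "'a::comm_semiring_1 poly"
  assumes "degree p \<le> D"
  shows "poly p x = (\<Sum>i\<le>D. coeff p i * x ^ i)"
proof -
  have "poly p x = poly (\<Sum>i\<le>D. monom (coeff p i) i) x"
    by (simp add: poly_as_sum_of_monoms'[OF assms])
  then show ?thesis
    by (simp add: poly_sum poly_monom)
qed

lemma poly2_eq_sum:
  assumes "bidegree_le Q D"
  shows "poly2 Q a b = (\<Sum>n\<le>D. \<Sum>m\<le>D. coeff (coeff Q n) m * a ^ n * b ^ m)"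
proof -
  have dQ: "degree Q \<le> D" and dc: "\<And>n. degree (coeff Q n) \<le> D"
    using assms by (auto simp: bidegree_le_def)
  have "poly2 Q a b = poly (\<Sum>n\<le>D. coeff Q n * [:a:] ^ n) b"
    unfolding poly2_def poly_eq_sum_coeff_le[OF dQ] ..
  also have "\<dots> = (\<Sum>n\<le>D. (\<Sum>m\<le>D. coeff (coeff Q n) m * b ^ m) * a ^ n)"
    by (simp add: poly_sum poly_eq_sum_coeff_le[OF dc])
  finally show ?thesis
    by (simp add: sum_distrib_left sum_distrib_right mult_ac)
qed

lemma infinite_nonzero: "infinite {a :: 'a :: semiring_char_0. a \<noteq> 0}"
proof -
  have "{a :: 'a. a \<noteq> 0} = UNIV - {0}"
    by auto
  then show ?thesis
    using infinite_UNIV_char_0 by (metis finite_Diff2 finite.emptyI finite_insert)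
qed

lemma sum_powers_eq_0_imp_coeff_eq_0:
  fixes c :: "nat \<Rightarrow> 'a::{idom,ring_char_0}"
  assumes "\<And>a. a \<noteq> 0 \<Longrightarrow> (\<Sum>n\<le>D. c n * a ^ n) = 0" and "n \<le> D"
  shows "c n = 0"
proof -
  let ?q = "\<Sum>k\<le>D. monom (c k) k"
  have "?q = 0"
  proof (rule ccontr)
    assume "?q \<noteq> 0"
    then have "finite {a. poly ?q a = 0}"
      by (rule poly_roots_finite)
    moreover have "{a. a \<noteq> 0} \<subseteq> {a. poly ?q a = 0}"
      using assms(1) by (auto simp: poly_sum poly_monom)
    ultimately show False
      using infinite_nonzero finite_subset by blast
  qed
  then have "coeff ?q n = 0"
    by simp
  then show ?thesis
    using assms(2) by (simp add: coeff_sum)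
qed

lemma sum2_powers_eq_0_imp_coeff_eq_0:
  fixes C :: "nat \<Rightarrow> nat \<Rightarrow> 'a::{idom,ring_char_0}"
  assumes "\<And>a b. a \<noteq> 0 \<Longrightarrow> b \<noteq> 0 \<Longrightarrow> (\<Sum>n\<le>D. \<Sum>m\<le>D. C n m * a ^ n * b ^ m) = 0"
    and "n \<le> D" and "m \<le> D"
  shows "C n m = 0"
proof -
  have "(\<Sum>m\<le>D. C n m * b ^ m) = 0" if "b \<noteq> 0" for b
  proof (rule sum_powers_eq_0_imp_coeff_eq_0[where c = "\<lambda>n. \<Sum>m\<le>D. C n m * b ^ m", OF _ assms(2)])
    fix a :: 'a
    assume "a \<noteq> 0"
    have "(\<Sum>n\<le>D. (\<Sum>m\<le>D. C n m * b ^ m) * a ^ n) = (\<Sum>n\<le>D. \<Sum>m\<le>D. C n m * a ^ n * b ^ m)"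
      by (simp add: sum_distrib_left sum_distrib_right mult_ac)
    then show "(\<Sum>n\<le>D. (\<Sum>m\<le>D. C n m * b ^ m) * a ^ n) = 0"
      using assms(1) \<open>a \<noteq> 0\<close> \<open>b \<noteq> 0\<close> by simp
  qed
  then show ?thesis
    using sum_powers_eq_0_imp_coeff_eq_0[where c = "C n", OF _ assms(3)] by (simp add: mult.commute)
qed

lemma poly2_eq_0_if_vanishing:
  fixes R :: "'a::{idom,ring_char_0} poly poly"
  assumes "bidegree_le R D" and "\<And>a b. a \<noteq> 0 \<Longrightarrow> b \<noteq> 0 \<Longrightarrow> poly2 R a b = 0"
  shows "R = 0"
proof (intro poly_eqI)
  fix n m
  have "coeff (coeff R n) m = 0" if "n \<le> D" "m \<le> D"
  proof (rule sum2_powers_eq_0_imp_coeff_eq_0[OF _ that])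
    fix a b :: 'a
    assume "a \<noteq> 0" and "b \<noteq> 0"
    then show "(\<Sum>n\<le>D. \<Sum>m\<le>D. coeff (coeff R n) m * a ^ n * b ^ m) = 0"
      using assms(2) by (simp add: poly2_eq_sum[OF assms(1), symmetric])
  qed
  moreover have "coeff (coeff R n) m = 0" if "D < n \<or> D < m"
    using assms(1) that by (rule bidegree_le_coeff_eq_0)
  ultimately show "coeff (coeff R n) m = coeff (coeff 0 n) m"
    by (cases "n \<le> D \<and> m \<le> D") auto
qed

lemma sum_square_eq_sum_subset:
  fixes D :: nat
  assumes "K \<subseteq> {..D} \<times> {..D}" and "\<And>n m. n \<le> D \<Longrightarrow> m \<le> D \<Longrightarrow> (n, m) \<notin> K \<Longrightarrow> f n m = 0"
  shows "(\<Sum>n\<le>D. \<Sum>m\<le>D. f n m) = (\<Sum>k\<in>K. f (fst k) (snd k))"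
proof -
  have "(\<Sum>n\<le>D. \<Sum>m\<le>D. f n m) = (\<Sum>k\<in>{..D} \<times> {..D}. f (fst k) (snd k))"
    by (simp add: sum.cartesian_product case_prod_beta)
  also have "\<dots> = (\<Sum>k\<in>K. f (fst k) (snd k))"
    using assms by (intro sum.mono_neutral_right) auto
  finally show ?thesis .
qed

lemma sum_subset_square_powers_eq_0_imp_coeff_eq_0:
  fixes c :: "nat \<times> nat \<Rightarrow> 'a::{idom,ring_char_0}"
  assumes K: "K \<subseteq> {..D} \<times> {..D}"
    and vanish: "\<And>a b. a \<noteq> 0 \<Longrightarrow> b \<noteq> 0 \<Longrightarrow> (\<Sum>k\<in>K. c k * a ^ fst k * b ^ snd k) = 0"
    and "k \<in> K"
  shows "c k = 0"
proof -
  define C where "C n m = (if (n, m) \<in> K then c (n, m) else 0)" for n m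
  have "(\<Sum>n\<le>D. \<Sum>m\<le>D. C n m * a ^ n * b ^ m) = (\<Sum>k\<in>K. c k * a ^ fst k * b ^ snd k)" for a b
    using sum_square_eq_sum_subset[OF K, of "\<lambda>n m. C n m * a ^ n * b ^ m"] by (simp add: C_def)
  then have "C (fst k) (snd k) = 0"
    using vanish assms(3) K by (intro sum2_powers_eq_0_imp_coeff_eq_0[of C D]) auto
  then show ?thesis
    using assms(3) by (simp add: C_def)
qed

lemma poly2_reflection_fst_coeffs:
  fixes Q :: "'a::{idom,ring_char_0} poly poly"
  assumes Q: "bidegree_le Q D"
    and reflection: "\<And>a b. a \<noteq> 0 \<Longrightarrow> b \<noteq> 0 \<Longrightarrow> poly2 Q (- a) b = s * poly2 Q a b"
  shows "coeff (coeff Q n) m * ((-1) ^ n - s) = 0"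
proof (cases "n \<le> D \<and> m \<le> D")
  case True
  define C where "C n m = coeff (coeff Q n) m * ((-1) ^ n - s)" for n m
  have "C n m = 0"
  proof (rule sum2_powers_eq_0_imp_coeff_eq_0)
    fix a b :: 'a
    assume "a \<noteq> 0" and "b \<noteq> 0"
    have "(\<Sum>n\<le>D. \<Sum>m\<le>D. C n m * a ^ n * b ^ m) = (\<Sum>n\<le>D. \<Sum>m\<le>D.
        coeff (coeff Q n) m * (- a) ^ n * b ^ m - s * (coeff (coeff Q n) m * a ^ n * b ^ m))"
      unfolding C_def by (rule sum.cong[OF refl], rule sum.cong[OF refl])
        (simp add: power_minus[of a] algebra_simps)
    also have "\<dots> = poly2 Q (- a) b - s * poly2 Q a b"
      by (simp add: poly2_eq_sum[OF Q] sum_subtractf sum_distrib_left)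
    finally show "(\<Sum>n\<le>D. \<Sum>m\<le>D. C n m * a ^ n * b ^ m) = 0"
      using reflection \<open>a \<noteq> 0\<close> \<open>b \<noteq> 0\<close> by simp
  qed (use True in auto)
  then show ?thesis
    by (simp add: C_def)
next
  case False
  then show ?thesis
    using bidegree_le_coeff_eq_0[OF Q, of n m] by auto
qed

lemma poly2_reflection_snd_coeffs:
  fixes Q :: "'a::{idom,ring_char_0} poly poly"
  assumes Q: "bidegree_le Q D"
    and reflection: "\<And>a b. a \<noteq> 0 \<Longrightarrow> b \<noteq> 0 \<Longrightarrow> poly2 Q a (- b) = s * poly2 Q a b"
  shows "coeff (coeff Q n) m * ((-1) ^ m - s) = 0"
proof (cases "n \<le> D \<and> m \<le> D")
  case True
  define C where "C n m = coeff (coeff Q n) m * ((-1) ^ m - s)" for n m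
  have "C n m = 0"
  proof (rule sum2_powers_eq_0_imp_coeff_eq_0)
    fix a b :: 'a
    assume "a \<noteq> 0" and "b \<noteq> 0"
    have "(\<Sum>n\<le>D. \<Sum>m\<le>D. C n m * a ^ n * b ^ m) = (\<Sum>n\<le>D. \<Sum>m\<le>D.
        coeff (coeff Q n) m * a ^ n * (- b) ^ m - s * (coeff (coeff Q n) m * a ^ n * b ^ m))"
      unfolding C_def by (rule sum.cong[OF refl], rule sum.cong[OF refl])
        (simp add: power_minus[of b] algebra_simps)
    also have "\<dots> = poly2 Q a (- b) - s * poly2 Q a b"
      by (simp add: poly2_eq_sum[OF Q] sum_subtractf sum_distrib_left)
    finally show "(\<Sum>n\<le>D. \<Sum>m\<le>D. C n m * a ^ n * b ^ m) = 0"
      using reflection \<open>a \<noteq> 0\<close> \<open>b \<noteq> 0\<close> by simp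
  qed (use True in auto)
  then show ?thesis
    by (simp add: C_def)
next
  case False
  then show ?thesis
    using bidegree_le_coeff_eq_0[OF Q, of n m] by auto
qed

lemma minus_one_power_ne:
  assumes "n \<le> d" and "odd (d - n)"
  shows "(-1 :: 'a :: {ring_1, ring_char_0}) ^ n \<noteq> (-1) ^ d"
proof -
  have "(-1 :: 'a) ^ d = (-1) ^ n * (-1) ^ (d - n)"
    using assms(1) by (metis le_add_diff_inverse power_add)
  then show ?thesis
    using assms(2) by (simp add: minus_one_power_iff)
qed

section \<open>Dimension of the span of an independent family\<close>

lemma (in vector_space) dim_image_eq_card:
  assumes "finite K" and indep: "\<And>c. (\<Sum>k\<in>K. scale (c k) (v k)) = 0 \<Longrightarrow> \<forall>k\<in>K. c k = 0"
  shows "dim (v ` K) = card K"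
proof -
  have inj: "inj_on v K"
  proof (rule inj_onI, rule ccontr)
    fix k l
    assume "k \<in> K" "l \<in> K" "v k = v l" "k \<noteq> l"
    let ?c = "\<lambda>i. (if i = k then 1 else 0) - (if i = l then 1 else 0) :: 'a"
    have "(\<Sum>i\<in>K. scale (?c i) (v i)) = (\<Sum>i\<in>K. if i = k then v i else 0) - (\<Sum>i\<in>K. if i = l then v i else 0)"
      by (simp add: scale_left_diff_distrib sum_subtractf if_distrib[of "\<lambda>c. scale c _"] cong: if_cong)
    also have "\<dots> = 0"
      using \<open>finite K\<close> \<open>k \<in> K\<close> \<open>l \<in> K\<close> \<open>v k = v l\<close> by simp
    finally have "\<forall>i\<in>K. ?c i = 0"
      by (rule indep)
    then have "?c k = 0"
      using \<open>k \<in> K\<close> by blast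
    then show False
      using \<open>k \<noteq> l\<close> by simp
  qed
  have "independent (v ` K)"
  proof
    assume "dependent (v ` K)"
    then have "\<exists>u. (\<exists>w\<in>v ` K. u w \<noteq> 0) \<and> (\<Sum>w\<in>v ` K. scale (u w) w) = 0"
      using dependent_finite[of "v ` K"] \<open>finite K\<close> by simp
    then obtain u where u: "\<exists>w\<in>v ` K. u w \<noteq> 0" "(\<Sum>w\<in>v ` K. scale (u w) w) = 0"
      by blast
    then have "(\<Sum>k\<in>K. scale (u (v k)) (v k)) = 0"
      by (simp add: sum.reindex[OF inj])
    then have "\<forall>k\<in>K. u (v k) = 0"
      by (rule indep)
    with u(1) show False
      by blast
  qed
  then show ?thesis
    using dim_eq_card_independent card_image[OF inj] by simp
qed

section \<open>A generating function\<close>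

lemma fps_div2_succ_square_times_1_minus_X:
  "Abs_fps (\<lambda>n. of_nat ((n div 2 + 1) ^ 2) :: 'a::field) * (1 - fps_X)
     = Abs_fps (\<lambda>n. if even n then of_nat n + 1 else 0)"
proof (rule fps_ext)
  fix n
  show "fps_nth (Abs_fps (\<lambda>n. of_nat ((n div 2 + 1) ^ 2) :: 'a) * (1 - fps_X)) n
     = fps_nth (Abs_fps (\<lambda>n. if even n then of_nat n + 1 else 0)) n"
  proof (cases n)
    case (Suc m)
    have "Suc m div 2 = (if even m then m div 2 else m div 2 + 1)"
      by presburger
    then show ?thesis
      using Suc by (auto simp: mult.commute[of _ fps_X] power2_eq_square
          algebra_simps elim!: evenE oddE)
  qed simp
qed

lemma fps_even_succ_times_1_minus_X2:
  "Abs_fps (\<lambda>n. if even n then of_nat n + 1 else 0 :: 'a::field) * (1 - fps_X ^ 2)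
     = Abs_fps (\<lambda>n. if n = 0 then 1 else if even n then 2 else 0)"
proof (rule fps_ext)
  fix n
  show "fps_nth (Abs_fps (\<lambda>n. if even n then of_nat n + 1 else 0 :: 'a) * (1 - fps_X ^ 2)) n
     = fps_nth (Abs_fps (\<lambda>n. if n = 0 then 1 else if even n then 2 else 0)) n"
  proof (cases "n < 2")
    case True
    then have "n = 0 \<or> n = 1"
      by auto
    then show ?thesis
      by (auto simp: right_diff_distrib mult.commute[of _ "fps_X ^ 2"] fps_X_power_mult_nth)
  next
    case False
    then show ?thesis
      by (auto simp: right_diff_distrib mult.commute[of _ "fps_X ^ 2"] fps_X_power_mult_nth
          elim!: evenE oddE)
  qed
qed

lemma fps_even_two_times_1_minus_X2:
  "Abs_fps (\<lambda>n. if n = 0 then 1 else if even n then 2 else 0 :: 'a::field) * (1 - fps_X ^ 2)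
     = 1 + fps_X ^ 2"
proof (rule fps_ext)
  fix n
  show "fps_nth (Abs_fps (\<lambda>n. if n = 0 then 1 else if even n then 2 else 0 :: 'a) * (1 - fps_X ^ 2)) n
     = fps_nth (1 + fps_X ^ 2 :: 'a fps) n"
  proof (cases "n < 3")
    case True
    then have "n = 0 \<or> n = 1 \<or> n = 2"
      by auto
    then show ?thesis
      by (auto simp: right_diff_distrib mult.commute[of _ "fps_X ^ 2"] fps_X_power_mult_nth)
  next
    case False
    then show ?thesis
      by (auto simp: right_diff_distrib mult.commute[of _ "fps_X ^ 2"] fps_X_power_mult_nth
          elim!: evenE oddE)
  qed
qed

lemma fps_div2_succ_square_eq:
  "Abs_fps (\<lambda>n. of_nat ((n div 2 + 1) ^ 2) :: 'a::field)
     = (1 + fps_X ^ 2) / ((1 - fps_X) * (1 - fps_X ^ 2) ^ 2)"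
proof -
  let ?A = "Abs_fps (\<lambda>n. of_nat ((n div 2 + 1) ^ 2) :: 'a)"
  let ?D = "(1 - fps_X) * (1 - fps_X ^ 2) ^ 2 :: 'a fps"
  have "?A * ?D = ?A * (1 - fps_X) * (1 - fps_X ^ 2) * (1 - fps_X ^ 2)"
    by (simp only: power2_eq_square[of "1 - fps_X ^ 2"] mult.assoc)
  also have "\<dots> = 1 + fps_X ^ 2"
    by (simp only: fps_div2_succ_square_times_1_minus_X fps_even_succ_times_1_minus_X2
        fps_even_two_times_1_minus_X2)
  finally have "?A * ?D = 1 + fps_X ^ 2" .
  moreover have D: "fps_nth ?D 0 \<noteq> 0"
    by simp
  ultimately have "(1 + fps_X ^ 2) / ?D = ?A * (?D * inverse ?D)"
    by (simp add: fps_divide_unit mult.assoc)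
  then show ?thesis
    using inverse_mult_eq_1'[OF D] by simp
qed

section \<open>SO(4) in antidiagonal coordinates\<close>

lemma cases_4: "(x :: 4) = 0 \<or> x = 1 \<or> x = 2 \<or> x = 3"
proof -
  have "x = 1 \<or> x = 2 \<or> x = 3 \<or> x = 4"
    by (rule exhaust_4)
  moreover have "(4 :: 4) = 0"
    by simp
  ultimately show ?thesis
    by (elim disjE) simp_all
qed

lemma UNIV_4: "(UNIV :: 4 set) = {0, 1, 2, 3}"
  using cases_4 by auto

lemma distinct_4:
  "(0::4) \<noteq> 1" "(0::4) \<noteq> 2" "(0::4) \<noteq> 3" "(1::4) \<noteq> 2" "(1::4) \<noteq> 3" "(2::4) \<noteq> 3"
  "(1::4) \<noteq> 0" "(2::4) \<noteq> 0" "(3::4) \<noteq> 0" "(2::4) \<noteq> 1" "(3::4) \<noteq> 1" "(3::4) \<noteq> 2"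
  by simp_all

lemma sum_UNIV_4: "(\<Sum>i\<in>UNIV. f i) = f 0 + f 1 + f 2 + f (3 :: 4)"
  unfolding UNIV_4 by (simp add: distinct_4 add.assoc)

lemma prod_UNIV_4: "(\<Prod>i\<in>UNIV. f i) = f 0 * f 1 * f 2 * f (3 :: 4)"
  unfolding UNIV_4 by (simp add: distinct_4 mult.assoc)

lemma all_4: "(\<forall>i :: 4. P i) \<longleftrightarrow> P 0 \<and> P 1 \<and> P 2 \<and> P 3"
  using cases_4 by metis

lemma less_4:
  "(0::4) < 1" "(0::4) < 2" "(0::4) < 3" "(1::4) < 2" "(1::4) < 3" "(2::4) < 3"
  "\<not> (1::4) < 0" "\<not> (2::4) < 0" "\<not> (3::4) < 0" "\<not> (2::4) < 1" "\<not> (3::4) < 1" "\<not> (3::4) < 2"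
  by (simp_all add: less_bit0_def bit0.Rep_numeral bit0.Rep_0 bit0.Rep_1)

lemma matrix_mult3_entry: "(A ** N ** B) $ i $ j = (\<Sum>k\<in>UNIV. \<Sum>l\<in>UNIV. A$i$k * N$k$l * B$l$j)"
  by (simp add: matrix_matrix_mult_def sum_distrib_right sum_distrib_left mult.assoc) (rule sum.swap)

lemma matrix_inv_unique:
  fixes A B :: "'a::semiring_1 ^ 'n ^ 'n"
  assumes "A ** B = mat 1" and "B ** A = mat 1"
  shows "matrix_inv A = B"
proof -
  have "A ** matrix_inv A = mat 1 \<and> matrix_inv A ** A = mat 1"
    unfolding matrix_inv_def using assms by (rule someI[of _ B, OF conjI])
  then have "matrix_inv A = matrix_inv A ** (A ** B)"
    using assms by simp
  also have "\<dots> = B"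
    using \<open>A ** matrix_inv A = mat 1 \<and> _\<close> by (simp add: matrix_mul_assoc)
  finally show ?thesis .
qed

definition J4 :: cmat4 where
  "J4 = (\<chi> i j. if i = 0 \<and> j = 3 \<or> i = 1 \<and> j = 2 \<or> i = 2 \<and> j = 1 \<or> i = 3 \<and> j = 0 then 1 else 0)"

definition SO_J :: "cmat4 set" where
  "SO_J = {N. transpose N ** J4 ** N = J4 \<and> det N = 1}"

lemma J4_entries:
  "J4$0$0 = 0" "J4$0$1 = 0" "J4$0$2 = 0" "J4$0$3 = 1"
  "J4$1$0 = 0" "J4$1$1 = 0" "J4$1$2 = 1" "J4$1$3 = 0"
  "J4$2$0 = 0" "J4$2$1 = 1" "J4$2$2 = 0" "J4$2$3 = 0"
  "J4$3$0 = 1" "J4$3$1 = 0" "J4$3$2 = 0" "J4$3$3 = 0"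
  by (simp_all add: J4_def distinct_4)

lemma J4_form_entry:
  "(transpose N ** J4 ** N) $ i $ j = N$0$i * N$3$j + N$1$i * N$2$j + N$2$i * N$1$j + N$3$i * N$0$j"
  by (simp add: matrix_matrix_mult_def sum_UNIV_4 transpose_def J4_def)

lemma SO_J_mult: "A \<in> SO_J \<Longrightarrow> B \<in> SO_J \<Longrightarrow> A ** B \<in> SO_J"
proof -
  assume "A \<in> SO_J" "B \<in> SO_J"
  have "transpose (A ** B) ** J4 ** (A ** B) = transpose B ** (transpose A ** J4 ** A) ** B"
    by (simp add: matrix_transpose_mul matrix_mul_assoc)
  with \<open>A \<in> SO_J\<close> \<open>B \<in> SO_J\<close> show ?thesis
    by (simp add: SO_J_def det_mul)
qed

lemma mat_minus_one_SO_J: "mat (-1) \<in> SO_J"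
proof -
  have "transpose (mat (-1)) ** J4 ** mat (-1) = J4"
    unfolding vec_eq_iff all_4 J4_form_entry by (simp add: mat_def J4_def)
  moreover have "det (mat (-1) :: cmat4) = 1"
    by (subst det_diagonal) (auto simp: mat_def prod_UNIV_4)
  ultimately show ?thesis
    by (simp add: SO_J_def)
qed

lemma uminus_eq_mult_minus_one: "- (N :: cmat4) = N ** mat (-1)"
  by (simp add: vec_eq_iff matrix_matrix_mult_def mat_def sum_UNIV_4 all_4 distinct_4)

lemma SO_J_uminus: "N \<in> SO_J \<Longrightarrow> - N \<in> SO_J"
  unfolding uminus_eq_mult_minus_one by (rule SO_J_mult) (simp_all add: mat_minus_one_SO_J)

definition Pmat_inv :: cmat4 where
  "Pmat_inv = (\<chi> i j.
     if i = 0 then (if j = 0 then 1/2 else if j = 1 then - \<i>/2 else 0)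
     else if i = 1 then (if j = 2 then 1/2 else if j = 3 then - \<i>/2 else 0)
     else if i = 2 then (if j = 2 then 1/2 else if j = 3 then \<i>/2 else 0)
     else (if j = 0 then 1/2 else if j = 1 then \<i>/2 else 0))"

lemma Pmat_Pmat_inv: "Pmat ** Pmat_inv = mat 1"
  unfolding vec_eq_iff all_4
  by (simp add: matrix_matrix_mult_def sum_UNIV_4 Pmat_def Pmat_inv_def mat_def distinct_4 field_simps)

lemma Pmat_inv_Pmat: "Pmat_inv ** Pmat = mat 1"
  unfolding vec_eq_iff all_4
  by (simp add: matrix_matrix_mult_def sum_UNIV_4 Pmat_def Pmat_inv_def mat_def distinct_4 field_simps)

lemma transpose_Pmat_Pmat: "transpose Pmat ** Pmat = (2::real) *\<^sub>R J4"
  unfolding vec_eq_iff all_4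
  by (simp add: matrix_matrix_mult_def sum_UNIV_4 Pmat_def J4_def transpose_def distinct_4
      scaleR_conv_of_real)

definition toJ :: "cmat4 \<Rightarrow> cmat4" where
  "toJ M = Pmat_inv ** M ** Pmat"

definition fromJ :: "cmat4 \<Rightarrow> cmat4" where
  "fromJ N = Pmat ** N ** Pmat_inv"

lemma toJ_fromJ [simp]: "toJ (fromJ N) = N"
  by (simp add: toJ_def fromJ_def matrix_mul_assoc Pmat_inv_Pmat)
    (simp add: matrix_mul_assoc[symmetric] Pmat_inv_Pmat)

lemma fromJ_toJ [simp]: "fromJ (toJ M) = M"
  by (simp add: toJ_def fromJ_def matrix_mul_assoc Pmat_Pmat_inv)
    (simp add: matrix_mul_assoc[symmetric] Pmat_Pmat_inv)

lemma fromJ_mult: "fromJ (A ** B) = fromJ A ** fromJ B"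
  by (simp add: fromJ_def matrix_mul_assoc)
    (simp add: matrix_mul_assoc[symmetric] Pmat_inv_Pmat)

lemma toJ_mult: "toJ (A ** B) = toJ A ** toJ B"
  by (metis fromJ_mult fromJ_toJ toJ_fromJ)

lemma fromJ_one: "fromJ (mat 1) = mat 1"
  by (simp add: fromJ_def Pmat_Pmat_inv)

lemma fromJ_uminus: "fromJ (- N) = - fromJ N"
  by (simp add: fromJ_def vec_eq_iff matrix_matrix_mult_def sum_negf)

lemma det_toJ: "det (toJ M) = det M"
proof -
  have "det Pmat_inv * det Pmat = 1"
    by (metis Pmat_inv_Pmat det_I det_mul)
  then show ?thesis
    by (simp add: toJ_def det_mul algebra_simps)
qed

lemma transpose_Pmat_inv_transpose_Pmat: "transpose Pmat_inv ** transpose Pmat = mat 1"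
  by (metis Pmat_Pmat_inv matrix_transpose_mul transpose_mat)

lemma toJ_congruence:
  "transpose (toJ M) ** (transpose Pmat ** Pmat) ** toJ M = transpose Pmat ** (transpose M ** M) ** Pmat"
proof -
  have "transpose (toJ M) ** (transpose Pmat ** Pmat) ** toJ M
      = transpose Pmat ** transpose M ** (transpose Pmat_inv ** transpose Pmat) ** (Pmat ** Pmat_inv) ** M ** Pmat"
    by (simp add: toJ_def matrix_transpose_mul matrix_mul_assoc)
  then show ?thesis
    by (simp add: transpose_Pmat_inv_transpose_Pmat Pmat_Pmat_inv matrix_mul_assoc)
qed

lemma transpose_Pmat_congruence_cancel:
  assumes "transpose Pmat ** A ** Pmat = transpose Pmat ** B ** Pmat"
  shows "A = B"
proof -
  have "transpose Pmat_inv ** (transpose Pmat ** A ** Pmat) ** Pmat_inv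
      = transpose Pmat_inv ** (transpose Pmat ** B ** Pmat) ** Pmat_inv"
    using assms by simp
  then show ?thesis
    by (simp add: matrix_mul_assoc transpose_Pmat_inv_transpose_Pmat)
      (simp add: matrix_mul_assoc[symmetric] Pmat_Pmat_inv)
qed

lemma SO4_iff_SO_J: "M \<in> SO4 \<longleftrightarrow> toJ M \<in> SO_J"
proof -
  have "transpose (toJ M) ** J4 ** toJ M = J4 \<longleftrightarrow>
        transpose (toJ M) ** (transpose Pmat ** Pmat) ** toJ M = transpose Pmat ** Pmat"
    unfolding transpose_Pmat_Pmat by (simp add: scalar_matrix_assoc[symmetric] matrix_scalar_ac)
  also have "\<dots> \<longleftrightarrow> transpose Pmat ** (transpose M ** M) ** Pmat = transpose Pmat ** mat 1 ** Pmat"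
    unfolding toJ_congruence by simp
  also have "\<dots> \<longleftrightarrow> transpose M ** M = mat 1"
    using transpose_Pmat_congruence_cancel[of "transpose M ** M" "mat 1"] by auto
  finally show ?thesis
    unfolding SO4_def SO_J_def using det_toJ by auto
qed

lemma fromJ_SO4_iff: "fromJ N \<in> SO4 \<longleftrightarrow> N \<in> SO_J"
  by (simp add: SO4_iff_SO_J)

section \<open>The unipotent radical and a normal form for its double cosets\<close>

definition upper_unip :: "complex \<Rightarrow> complex \<Rightarrow> cmat4" where
  "upper_unip a b = (\<chi> i j. if i = j then 1 else if i = 0 \<and> j = 1 then a else if i = 0 \<and> j = 2 then b
     else if i = 0 \<and> j = 3 then - (a * b) else if i = 1 \<and> j = 3 then - b
     else if i = 2 \<and> j = 3 then - a else 0)"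

definition lower_unip :: "complex \<Rightarrow> complex \<Rightarrow> cmat4" where
  "lower_unip a b = transpose (upper_unip a b)"

lemma upper_unip_mult: "upper_unip a b ** upper_unip a' b' = upper_unip (a + a') (b + b')"
  unfolding vec_eq_iff all_4
  by (simp add: matrix_matrix_mult_def sum_UNIV_4 upper_unip_def distinct_4 algebra_simps)

lemma upper_unip_zero: "upper_unip 0 0 = mat 1"
  unfolding vec_eq_iff all_4 by (simp add: upper_unip_def mat_def distinct_4)

lemma upper_unitriangular_upper_unip: "upper_unitriangular (upper_unip a b)"
  unfolding upper_unitriangular_def
proof (intro allI conjI impI)
  fix i j :: 4
  assume "j < i"
  then show "upper_unip a b $ i $ j = 0"
    using cases_4[of i] cases_4[of j] by (elim disjE) (simp_all add: upper_unip_def less_4)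
qed (simp add: upper_unip_def)

lemma upper_unip_SO_J: "upper_unip a b \<in> SO_J"
proof -
  have "transpose (upper_unip a b) ** J4 ** upper_unip a b = J4"
    unfolding vec_eq_iff all_4 J4_form_entry
    by (simp add: upper_unip_def J4_def distinct_4 algebra_simps)
  moreover have "det (upper_unip a b) = 1"
    by (subst det_upperdiagonal) (auto simp: upper_unip_def prod_UNIV_4 distinct_4 less_4)
  ultimately show ?thesis
    by (simp add: SO_J_def)
qed

lemma lower_unip_SO_J: "lower_unip a b \<in> SO_J"
proof -
  have "transpose (lower_unip a b) ** J4 ** lower_unip a b = J4"
    unfolding vec_eq_iff all_4 J4_form_entry
    by (simp add: lower_unip_def transpose_def upper_unip_def J4_def distinct_4 algebra_simps)
  moreover have "det (lower_unip a b) = 1"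
    using upper_unip_SO_J by (simp add: lower_unip_def SO_J_def)
  ultimately show ?thesis
    by (simp add: SO_J_def)
qed

lemma matrix_inv_fromJ_upper_unip: "matrix_inv (fromJ (upper_unip a b)) = fromJ (upper_unip (- a) (- b))"
  by (rule matrix_inv_unique) (simp_all add: fromJ_mult[symmetric] upper_unip_mult upper_unip_zero fromJ_one)

lemma fromJ_upper_unip_U_SO4: "fromJ (upper_unip a b) \<in> U_SO4"
proof -
  have "fromJ (upper_unip a b) ** Pmat = Pmat ** upper_unip a b"
    by (simp add: fromJ_def matrix_mul_assoc[symmetric] Pmat_inv_Pmat)
  then show ?thesis
    unfolding U_SO4_def using fromJ_SO4_iff upper_unip_SO_J upper_unitriangular_upper_unip by blast
qed

lemma upper_unitriangular_SO_J:
  assumes "h \<in> SO_J" and "upper_unitriangular h"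
  shows "h = upper_unip (h$0$1) (h$0$2)"
proof -
  have E: "h$0$i * h$3$j + h$1$i * h$2$j + h$2$i * h$1$j + h$3$i * h$0$j = J4$i$j" for i j
    using assms(1) J4_form_entry[of h i j] by (simp add: SO_J_def)
  have z: "h$1$0 = 0" "h$2$0 = 0" "h$3$0 = 0" "h$2$1 = 0" "h$3$1 = 0" "h$3$2 = 0"
    and o: "h$0$0 = 1" "h$1$1 = 1" "h$2$2 = 1" "h$3$3 = 1"
    using assms(2) unfolding upper_unitriangular_def by (simp_all add: less_4)
  have "2 * h$1$2 = 0"
    using E[of 2 2] z o by (simp add: J4_entries)
  then have h12: "h$1$2 = 0"
    by simp
  have h23: "h$2$3 = - h$0$1"
    using E[of 1 3] z o by (simp add: J4_entries algebra_simps eq_neg_iff_add_eq_0)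
  have h13: "h$1$3 = - h$0$2"
    using E[of 2 3] z o h12 by (simp add: J4_entries algebra_simps eq_neg_iff_add_eq_0)
  have "2 * (h$0$3 + h$1$3 * h$2$3) = 0"
    using E[of 3 3] z o by (simp add: J4_entries algebra_simps)
  then have "h$0$3 + h$1$3 * h$2$3 = 0"
    by (subst (asm) mult_eq_0_iff) simp
  then have h03: "h$0$3 = - (h$0$1 * h$0$2)"
    using h13 h23 by (simp add: eq_neg_iff_add_eq_0 mult.commute)
  show ?thesis
    unfolding vec_eq_iff all_4 using z o h12 h23 h13 h03 by (simp add: upper_unip_def distinct_4)
qed

lemma U_SO4_eq: "U_SO4 = {fromJ (upper_unip a b) | a b. True}"
proof (intro subset_antisym subsetI)
  fix g
  assume "g \<in> U_SO4"
  then obtain h where g: "g \<in> SO4" and h: "upper_unitriangular h" and gh: "g ** Pmat = Pmat ** h"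
    unfolding U_SO4_def by blast
  have "toJ g = h"
    by (simp add: toJ_def matrix_mul_assoc[symmetric] gh) (simp add: matrix_mul_assoc Pmat_inv_Pmat)
  then have "h = upper_unip (h$0$1) (h$0$2)"
    using g h upper_unitriangular_SO_J SO4_iff_SO_J by blast
  then have "g = fromJ (upper_unip (h$0$1) (h$0$2))"
    using fromJ_toJ \<open>toJ g = h\<close> by metis
  then show "g \<in> {fromJ (upper_unip a b) | a b. True}"
    by blast
qed (auto simp: fromJ_upper_unip_U_SO4)

lemma toJ_U_action:
  "toJ (fromJ (upper_unip a1 b1) ** M ** matrix_inv (fromJ (upper_unip a2 b2)))
     = upper_unip a1 b1 ** toJ M ** upper_unip (- a2) (- b2)"
  by (simp add: matrix_inv_fromJ_upper_unip toJ_mult)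

definition antidiag_nf :: "complex \<Rightarrow> complex \<Rightarrow> cmat4" where
  "antidiag_nf x r = (\<chi> i j. if i = 0 \<and> j = 3 then 1/x else if i = 1 \<and> j = 2 then 1/r
      else if i = 2 \<and> j = 1 then r else if i = 3 \<and> j = 0 then x else 0)"

text \<open>For N$3$0 \<noteq> 0 the two unipotent factors clear the entries (1,0), (2,0), (3,1)
  and (3,2) of N (lemma unip_normalize_SO_J); for N$3$0 = 0 the definition is junk.\<close>
definition unip_normalize :: "cmat4 \<Rightarrow> cmat4" where
  "unip_normalize N = upper_unip (N$2$0 / N$3$0) (N$1$0 / N$3$0) ** N ** upper_unip (- N$3$1 / N$3$0) (- N$3$2 / N$3$0)"

lemma det_swap_03:
  "det (\<chi> i j. if i = 0 \<and> j = 3 then y else if i = 1 \<and> j = 1 then a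
      else if i = 2 \<and> j = 2 then b else if i = 3 \<and> j = 0 then x else 0 :: cmat4) = - (x * y * a * b)"
proof -
  let ?p = "Transposition.transpose (0::4) 3"
  let ?D = "(\<chi> i j. if i = j then (if i = 0 then x else if i = 1 then a else if i = 2 then b else y) else 0) :: cmat4"
  have p: "?p permutes UNIV"
    by (rule permutes_swap_id) auto
  have swap: "(\<chi> i j. if i = 0 \<and> j = 3 then y else if i = 1 \<and> j = 1 then a
      else if i = 2 \<and> j = 2 then b else if i = 3 \<and> j = 0 then x else 0 :: cmat4) = (\<chi> i. ?D $ ?p i)"
    unfolding vec_eq_iff all_4 by (simp add: distinct_4 Transposition.transpose_def)
  have "det ?D = x * a * b * y"
    by (subst det_diagonal) (auto simp: prod_UNIV_4 distinct_4)
  then show ?thesis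
    unfolding swap det_permute_rows[OF p] by (simp add: sign_swap_id)
qed

text \<open>If N$1$1 were nonzero, N would be antidiagonal in rows 0 and 3 and diagonal in
  rows 1 and 2, so that det N = -1.\<close>
lemma SO_J_antidiag_nf:
  assumes N: "N \<in> SO_J"
    and z: "N$1$0 = 0" "N$2$0 = 0" "N$3$1 = 0" "N$3$2 = 0" and x: "N$3$0 \<noteq> 0"
  shows "N = antidiag_nf (N$3$0) (N$2$1) \<and> N$2$1 \<noteq> 0"
proof -
  have E: "N$0$i * N$3$j + N$1$i * N$2$j + N$2$i * N$1$j + N$3$i * N$0$j = J4$i$j" for i j
    using N J4_form_entry[of N i j] by (simp add: SO_J_def)
  have n00: "N$0$0 = 0" using E[of 0 0] x z by (simp add: J4_entries)
  have n01: "N$0$1 = 0" using E[of 0 1] x z by (simp add: J4_entries)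
  have n02: "N$0$2 = 0" using E[of 0 2] x z by (simp add: J4_entries)
  have n03: "N$0$3 = 1 / N$3$0" using E[of 0 3] x z n00 by (simp add: J4_entries field_simps)
  have e11: "N$1$1 * N$2$1 = 0" using E[of 1 1] z n01 by (simp add: J4_entries)
  have e22: "N$1$2 * N$2$2 = 0" using E[of 2 2] z n02 by (simp add: J4_entries)
  have e12: "N$1$1 * N$2$2 + N$2$1 * N$1$2 = 1" using E[of 1 2] z n01 n02 by (simp add: J4_entries algebra_simps)
  have e13: "N$1$1 * N$2$3 + N$2$1 * N$1$3 = 0" using E[of 1 3] z n01 by (simp add: J4_entries algebra_simps)
  have e23: "N$1$2 * N$2$3 + N$2$2 * N$1$3 = 0" using E[of 2 3] z n02 by (simp add: J4_entries algebra_simps)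
  have "2 * (N$0$3 * N$3$3 + N$1$3 * N$2$3) = 0" using E[of 3 3] by (simp add: J4_entries z algebra_simps)
  then have e33: "N$0$3 * N$3$3 + N$1$3 * N$2$3 = 0" by (subst (asm) mult_eq_0_iff) simp
  show ?thesis
  proof (cases "N$1$1 = 0")
    case True
    then have r: "N$2$1 * N$1$2 = 1" using e12 by simp
    then have nz: "N$2$1 \<noteq> 0" "N$1$2 \<noteq> 0" by auto
    have n22: "N$2$2 = 0" using e22 nz by simp
    moreover have n13: "N$1$3 = 0" using e13 True nz by simp
    moreover have "N$2$3 = 0" using e23 nz n22 by simp
    moreover have "N$3$3 = 0" using e33 n03 x n13 by simp
    moreover have "N$1$2 = 1 / N$2$1" using r nz by (simp add: field_simps)
    ultimately show ?thesis
      using True nz n00 n01 n02 n03 z x unfolding vec_eq_iff all_4 by (simp add: antidiag_nf_def distinct_4)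
  next
    case False
    then have r: "N$2$1 = 0" using e11 by simp
    then have a: "N$1$1 * N$2$2 = 1" using e12 by simp
    then have nz: "N$2$2 \<noteq> 0" by auto
    have n12: "N$1$2 = 0" using e22 nz by simp
    have "N$2$3 = 0" using e13 r False by simp
    moreover have n13: "N$1$3 = 0" using e23 nz n12 by simp
    moreover have "N$3$3 = 0" using e33 n03 x n13 by simp
    ultimately have diag: "N = (\<chi> i j. if i = 0 \<and> j = 3 then N$0$3 else if i = 1 \<and> j = 1 then N$1$1
      else if i = 2 \<and> j = 2 then N$2$2 else if i = 3 \<and> j = 0 then N$3$0 else 0 :: cmat4)"
      using r n00 n01 n02 n12 z unfolding vec_eq_iff all_4 by (simp add: distinct_4)
    have "det N = - (N$3$0 * N$0$3 * N$1$1 * N$2$2)"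
      using det_swap_03[of "N$0$3" "N$1$1" "N$2$2" "N$3$0"] unfolding diag[symmetric] .
    also have "\<dots> = -1"
      using n03 x a by (simp add: field_simps)
    finally show ?thesis
      using N by (simp add: SO_J_def)
  qed
qed

lemma unip_normalize_SO_J:
  assumes "N \<in> SO_J" and "N$3$0 \<noteq> 0"
  shows "unip_normalize N = antidiag_nf (N$3$0) (unip_normalize N $2$1) \<and> unip_normalize N $2$1 \<noteq> 0"
proof -
  have "unip_normalize N \<in> SO_J"
    using assms(1) by (simp add: unip_normalize_def SO_J_mult upper_unip_SO_J)
  moreover have "unip_normalize N $1$0 = 0" "unip_normalize N $2$0 = 0" "unip_normalize N $3$1 = 0"
    "unip_normalize N $3$2 = 0" "unip_normalize N $3$0 = N$3$0"
    using assms(2)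
    by (simp_all add: unip_normalize_def matrix_mult3_entry sum_UNIV_4 upper_unip_def distinct_4 field_simps)
  ultimately show ?thesis
    using SO_J_antidiag_nf assms(2) by metis
qed

lemma unip_normalize_uminus: "unip_normalize (- N) = - unip_normalize N"
  by (simp add: unip_normalize_def vec_eq_iff matrix_matrix_mult_def sum_negf)

lemma uminus_antidiag_nf: "- antidiag_nf x r = antidiag_nf (- x) (- r)"
  by (simp add: antidiag_nf_def vec_eq_iff)

lemma unip_normalize_lower_unip:
  assumes "a \<noteq> 0" and "b \<noteq> 0"
  shows "unip_normalize (lower_unip a b) = antidiag_nf (- (a * b)) (- b / a)"
proof -
  have x: "lower_unip a b $3$0 = - (a * b)"
    by (simp add: lower_unip_def transpose_def upper_unip_def distinct_4)
  have r: "unip_normalize (lower_unip a b) $2$1 = - b / a"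
    using assms
    by (simp add: unip_normalize_def matrix_mult3_entry sum_UNIV_4 upper_unip_def lower_unip_def
        transpose_def distinct_4 field_simps)
  show ?thesis
    using unip_normalize_SO_J[OF lower_unip_SO_J, of a b] assms unfolding x r by simp
qed

lemma SO_J_orbit_meets_lower_unip:
  assumes "N \<in> SO_J" and "N$3$0 \<noteq> 0"
  obtains a b where "a \<noteq> 0" "b \<noteq> 0" "unip_normalize N = unip_normalize (lower_unip a b)"
proof -
  define r where "r = unip_normalize N $2$1"
  have nf: "unip_normalize N = antidiag_nf (N$3$0) r" and r: "r \<noteq> 0"
    using unip_normalize_SO_J[OF assms] by (simp_all add: r_def)
  define a where "a = csqrt (N$3$0 / r)"
  have a2: "a^2 = N$3$0 / r"
    by (simp add: a_def)
  then have a: "a \<noteq> 0"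
    using assms(2) r by auto
  have "unip_normalize (lower_unip a (- (r * a))) = antidiag_nf (N$3$0) r"
    using a r a2 by (simp add: unip_normalize_lower_unip power2_eq_square field_simps)
  then show ?thesis
    using that[of a "- (r * a)"] a r nf by simp
qed

lemma unip_normalize_lower_unip_minus:
  assumes "a \<noteq> 0" and "b \<noteq> 0"
  shows "unip_normalize (lower_unip (- a) b) = unip_normalize (- lower_unip a b)"
    and "unip_normalize (lower_unip a (- b)) = unip_normalize (- lower_unip a b)"
  using assms by (simp_all add: unip_normalize_uminus unip_normalize_lower_unip uminus_antidiag_nf)

lemma lower_unip_mult_entry_30:
  "(lower_unip a b ** N) $ 3 $ 0 = - (a * b) * N$0$0 - b * N$1$0 - a * N$2$0 + N$3$0"
  by (simp add: matrix_matrix_mult_def sum_UNIV_4 lower_unip_def transpose_def upper_unip_def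
      distinct_4 algebra_simps)

lemma SO_J_lower_unip_mult_entry_30_nonzero:
  assumes "N \<in> SO_J"
  obtains a b where "(lower_unip a b ** N) $ 3 $ 0 \<noteq> 0"
proof (rule ccontr)
  assume "\<not> thesis"
  then have "(lower_unip a b ** N) $ 3 $ 0 = 0" for a b
    using that by blast
  from this[of 0 0] this[of 0 1] this[of 1 0] this[of 1 1]
  have "column 0 N = 0"
    by (simp add: lower_unip_mult_entry_30 column_def vec_eq_iff all_4)
  then have "det N = 0"
    by (rule det_zero_column(1))
  then show False
    using assms by (simp add: SO_J_def)
qed

section \<open>Homogeneous polynomial functions on the cone\<close>

definition smat :: "complex \<Rightarrow> cmat4 \<Rightarrow> cmat4" where
  "smat c M = (\<chi> i j. c * M $ i $ j)"

lemma cone_SO4_iff: "M \<in> cone_SO4 \<longleftrightarrow> (\<exists>c M'. M = smat c M' \<and> M' \<in> SO4)"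
  unfolding cone_SO4_def smat_def by blast

lemma SO4_cone: "M \<in> SO4 \<Longrightarrow> M \<in> cone_SO4"
  unfolding cone_SO4_iff by (rule exI[of _ 1]) (auto simp: smat_def vec_eq_iff)

lemma smat_minus_one: "smat (-1) M = - M"
  by (simp add: smat_def vec_eq_iff)

lemma matrix_mult_smat: "smat c A ** B = smat c (A ** B)" "A ** smat c B = smat c (A ** B)"
  by (simp_all add: smat_def matrix_matrix_mult_def vec_eq_iff sum_distrib_left algebra_simps)

lemma U_action_SO4:
  assumes "g \<in> U_SO4" "h \<in> U_SO4" "M \<in> SO4"
  shows "g ** M ** matrix_inv h \<in> SO4"
  using assms unfolding U_SO4_eq SO4_iff_SO_J
  by (auto simp: toJ_U_action SO_J_mult upper_unip_SO_J)

lemma U_action_cone: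
  assumes "g \<in> U_SO4" "h \<in> U_SO4" "M \<in> cone_SO4"
  shows "g ** M ** matrix_inv h \<in> cone_SO4"
  using assms U_action_SO4 unfolding cone_SO4_iff by (metis matrix_mult_smat)

interpretation fs: vector_space fscale
  by unfold_locales (auto simp: fscale_def fun_eq_iff algebra_simps)

lemma fscale_apply: "fscale c f x = c * f x"
  by (simp add: fscale_def)

lemma sum_apply: "(sum f A) x = (\<Sum>a\<in>A. f a x)"
  by (induct A rule: infinite_finite_induct) auto

definition monomial :: "(4 \<Rightarrow> 4 \<Rightarrow> nat) \<Rightarrow> cmat4 \<Rightarrow> complex" where
  "monomial e = (\<lambda>M. \<Prod>i\<in>UNIV. \<Prod>j\<in>UNIV. (M $ i $ j) ^ (e i j))"

lemma monomials_iff: "p \<in> monomials d \<longleftrightarrow> (\<exists>e. p = monomial e \<and> (\<Sum>i\<in>UNIV. \<Sum>j\<in>UNIV. e i j) = d)"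
  unfolding monomials_def monomial_def by blast

lemma hom_polys_induct [consumes 1, case_names zero add]:
  assumes "p \<in> hom_polys d"
    and "P 0"
    and "\<And>c e q. (\<Sum>i\<in>UNIV. \<Sum>j\<in>UNIV. e i j) = d \<Longrightarrow> P q \<Longrightarrow> P (fscale c (monomial e) + q)"
  shows "P p"
  using assms(1) unfolding hom_polys_def
proof (induct rule: fs.span_induct_alt)
  case (step c x y)
  then show ?case
    using assms(3) unfolding monomials_iff by blast
qed (fact assms(2))

lemma hom_polys_monomial: "(\<Sum>i\<in>UNIV. \<Sum>j\<in>UNIV. e i j) = d \<Longrightarrow> monomial e \<in> hom_polys d"
  unfolding hom_polys_def by (rule fs.span_base) (auto simp: monomials_iff)

lemma hom_polys_add: "p \<in> hom_polys d \<Longrightarrow> q \<in> hom_polys d \<Longrightarrow> p + q \<in> hom_polys d"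
  unfolding hom_polys_def by (rule fs.span_add)

lemma hom_polys_fscale: "p \<in> hom_polys d \<Longrightarrow> fscale c p \<in> hom_polys d"
  unfolding hom_polys_def by (rule fs.span_scale)

lemma hom_polys_zero: "0 \<in> hom_polys d"
  unfolding hom_polys_def by (rule fs.span_zero)

lemma hom_polys_diff: "p \<in> hom_polys d \<Longrightarrow> q \<in> hom_polys d \<Longrightarrow> (\<lambda>M. p M - q M) \<in> hom_polys d"
  using fs.span_diff[of p "monomials d" q] by (simp add: hom_polys_def fun_diff_def)

lemma hom_polys_sum:
  assumes "\<And>k. k \<in> K \<Longrightarrow> p k \<in> hom_polys d"
  shows "(\<lambda>M. \<Sum>k\<in>K. c k * p k M) \<in> hom_polys d"
proof -
  have "(\<Sum>k\<in>K. fscale (c k) (p k)) \<in> hom_polys d"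
    using assms unfolding hom_polys_def by (intro fs.span_sum fs.span_scale)
  moreover have "(\<Sum>k\<in>K. fscale (c k) (p k)) = (\<lambda>M. \<Sum>k\<in>K. c k * p k M)"
    by (simp add: fun_eq_iff sum_apply fscale_apply)
  ultimately show ?thesis
    by simp
qed

lemma hom_polys_monomial_mult:
  assumes "(\<Sum>i\<in>UNIV. \<Sum>j\<in>UNIV. e i j) = d1" and "q \<in> hom_polys d2"
  shows "(\<lambda>M. monomial e M * q M) \<in> hom_polys (d1 + d2)"
  using assms(2)
proof (induct rule: hom_polys_induct)
  case zero
  then show ?case
    by (simp add: hom_polys_zero flip: zero_fun_def)
next
  case (add c e' q')
  have "(\<Sum>i\<in>UNIV. \<Sum>j\<in>UNIV. e i j + e' i j) = d1 + d2"
    using add.hyps(1) assms(1) by (simp add: sum.distrib)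
  then have "monomial (\<lambda>i j. e i j + e' i j) \<in> hom_polys (d1 + d2)"
    by (rule hom_polys_monomial)
  moreover have "monomial (\<lambda>i j. e i j + e' i j) = (\<lambda>M. monomial e M * monomial e' M)"
    by (simp add: monomial_def fun_eq_iff power_add prod.distrib)
  ultimately have "fscale c (\<lambda>M. monomial e M * monomial e' M) + (\<lambda>M. monomial e M * q' M)
      \<in> hom_polys (d1 + d2)"
    using add.hyps(2) by (simp add: hom_polys_add hom_polys_fscale)
  moreover have "fscale c (\<lambda>M. monomial e M * monomial e' M) + (\<lambda>M. monomial e M * q' M)
      = (\<lambda>M. monomial e M * (fscale c (monomial e') + q') M)"
    by (simp add: fun_eq_iff fscale_def algebra_simps)
  ultimately show ?case
    by simp
qed

lemma hom_polys_mult: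
  assumes "p \<in> hom_polys d1" and "q \<in> hom_polys d2"
  shows "(\<lambda>M. p M * q M) \<in> hom_polys (d1 + d2)"
  using assms(1)
proof (induct rule: hom_polys_induct)
  case zero
  then show ?case
    by (simp add: hom_polys_zero flip: zero_fun_def)
next
  case (add c e p')
  then have "fscale c (\<lambda>M. monomial e M * q M) + (\<lambda>M. p' M * q M) \<in> hom_polys (d1 + d2)"
    using hom_polys_monomial_mult[OF _ assms(2)] by (intro hom_polys_add hom_polys_fscale)
  moreover have "fscale c (\<lambda>M. monomial e M * q M) + (\<lambda>M. p' M * q M)
      = (\<lambda>M. (fscale c (monomial e) + p') M * q M)"
    by (simp add: fun_eq_iff fscale_def algebra_simps)
  ultimately show ?case
    by simp
qed

lemma hom_polys_one: "(\<lambda>M. 1) \<in> hom_polys 0"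
  using hom_polys_monomial[of "\<lambda>i j. 0" 0] by (simp add: monomial_def)

lemma hom_polys_power: "p \<in> hom_polys d \<Longrightarrow> (\<lambda>M. p M ^ k) \<in> hom_polys (k * d)"
  by (induct k) (simp_all add: hom_polys_one hom_polys_mult)

lemma hom_polys_entry: "(\<lambda>M. M $ i $ j) \<in> hom_polys 1"
proof -
  let ?e = "\<lambda>k l. if k = i \<and> l = j then 1 else (0::nat)"
  have "(\<Sum>k\<in>UNIV. \<Sum>l\<in>UNIV. ?e k l) = (\<Sum>k\<in>UNIV. if k = i then 1 else 0)"
    by (rule sum.cong) auto
  then have "monomial ?e \<in> hom_polys 1"
    by (intro hom_polys_monomial) simp
  moreover have "monomial ?e = (\<lambda>M. M $ i $ j)"
  proof
    fix M :: cmat4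
    have "monomial ?e M = (\<Prod>k\<in>UNIV. \<Prod>l\<in>UNIV. if k = i \<and> l = j then M $ k $ l else 1)"
      unfolding monomial_def by (intro prod.cong refl) auto
    also have "\<dots> = (\<Prod>k\<in>UNIV. if k = i then M $ k $ j else 1)"
      by (intro prod.cong refl) auto
    finally show "monomial ?e M = M $ i $ j"
      by simp
  qed
  ultimately show ?thesis
    by simp
qed

lemma hom_polys_smat: "p \<in> hom_polys d \<Longrightarrow> p (smat c M) = c ^ d * p M"
proof (induct rule: hom_polys_induct)
  case (add c' e q)
  have "monomial e (smat c M) = c ^ d * monomial e M"
    unfolding monomial_def smat_def add.hyps(1)[symmetric]
    by (simp add: power_mult_distrib prod.distrib power_sum)
  then show ?case
    using add.hyps(2) by (simp add: fscale_def algebra_simps)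
qed simp

lemma biaffine_lower_unip_entry: "biaffine (\<lambda>a b. (A ** lower_unip a b ** B) $ i $ j)"
proof -
  have "biaffine (\<lambda>a b. lower_unip a b $ k $ l)" for k l
    using cases_4[of k] cases_4[of l]
    by (elim disjE) (simp_all add: lower_unip_def transpose_def upper_unip_def distinct_4 biaffine_basic)
  then show ?thesis
    unfolding matrix_mult3_entry
    by (intro biaffine_sum) (simp add: mult.commute[of _ "B $ _ $ _"] mult.assoc biaffine_cmult)
qed

lemma hom_polys_comp_biaffine:
  assumes entries: "\<And>i j. biaffine (\<lambda>a b. \<Phi> a b $ i $ j)"
    and p: "p \<in> hom_polys d"
  obtains Q where "bidegree_le Q d" "\<And>a b. p (\<Phi> a b) = poly2 Q a b"
proof -
  obtain E where E: "\<And>i j. bidegree_le (E i j) 1" "\<And>i j a b. \<Phi> a b $ i $ j = poly2 (E i j) a b"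
    using entries unfolding biaffine_def by metis
  have "\<exists>Q. bidegree_le Q d \<and> (\<forall>a b. p (\<Phi> a b) = poly2 Q a b)"
    using p
  proof (induct rule: hom_polys_induct)
    case zero
    then show ?case
      using bidegree_le_0 by (metis poly2_def poly_0 zero_fun_apply)
  next
    case (add c e q)
    then obtain Q where Q: "bidegree_le Q d" "\<And>a b. q (\<Phi> a b) = poly2 Q a b"
      by blast
    let ?R = "\<Prod>i\<in>UNIV. \<Prod>j\<in>UNIV. E i j ^ e i j"
    have "bidegree_le ?R (\<Sum>i\<in>UNIV. \<Sum>j\<in>UNIV. e i j * 1)"
      by (intro bidegree_le_prod bidegree_le_power E) simp_all
    then have "bidegree_le ([:[:c:]:] * ?R + Q) d"
      using add.hyps(1) bidegree_le_mult[OF bidegree_le_const] Q(1) by (intro bidegree_le_add) simp_all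
    moreover have "monomial e (\<Phi> a b) = poly2 ?R a b" for a b
      by (simp add: monomial_def E(2) poly2_prod poly2_power)
    then have "(fscale c (monomial e) + q) (\<Phi> a b) = poly2 ([:[:c:]:] * ?R + Q) a b" for a b
      by (simp add: fscale_def Q(2) poly2_add poly2_smult)
    ultimately show ?case
      by blast
  qed
  then show ?thesis
    using that by blast
qed

lemma lincomb_in_span: "(\<lambda>M. \<Sum>k\<in>K. c k * v k M) \<in> fs.span (v ` K)"
proof -
  have "(\<Sum>k\<in>K. fscale (c k) (v k)) \<in> fs.span (v ` K)"
    by (intro fs.span_sum fs.span_scale fs.span_base) auto
  moreover have "(\<Sum>k\<in>K. fscale (c k) (v k)) = (\<lambda>M. \<Sum>k\<in>K. c k * v k M)"
    by (simp add: fun_eq_iff sum_apply fscale_apply)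
  ultimately show ?thesis
    by simp
qed

definition restrict_cone :: "(cmat4 \<Rightarrow> complex) \<Rightarrow> cmat4 \<Rightarrow> complex" where
  "restrict_cone p = (\<lambda>M. if M \<in> cone_SO4 then p M else 0)"

definition UU_invariant :: "(cmat4 \<Rightarrow> complex) \<Rightarrow> bool" where
  "UU_invariant f \<longleftrightarrow> (\<forall>g\<in>U_SO4. \<forall>h\<in>U_SO4. \<forall>M\<in>cone_SO4. f (g ** M ** matrix_inv h) = f M)"

lemma inv_deg_iff:
  "f \<in> inv_deg d \<longleftrightarrow> (\<exists>p \<in> hom_polys d. f = restrict_cone p) \<and> UU_invariant f"
  unfolding inv_deg_def coord_ring_deg_def UU_invariant_def restrict_cone_def by blast

lemma UU_invariant_diff: "UU_invariant f \<Longrightarrow> UU_invariant g \<Longrightarrow> UU_invariant (\<lambda>M. f M - g M)"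
  by (simp add: UU_invariant_def)

lemma UU_invariant_span:
  assumes "\<And>f. f \<in> S \<Longrightarrow> UU_invariant f" and "f \<in> fs.span S"
  shows "UU_invariant f"
proof -
  have "fs.subspace {f. UU_invariant f}"
    unfolding fs.subspace_def by (simp add: UU_invariant_def fscale_def)
  then show ?thesis
    using fs.span_minimal[of S "{f. UU_invariant f}"] assms by auto
qed

lemma UU_invariant_unip_normalize:
  assumes f: "UU_invariant f" and N: "N \<in> SO_J" "N$3$0 \<noteq> 0"
  shows "f (fromJ (unip_normalize N)) = f (fromJ N)"
proof -
  define a1 b1 a2 b2 where "a1 = N$2$0 / N$3$0" and "b1 = N$1$0 / N$3$0"
    and "a2 = N$3$1 / N$3$0" and "b2 = N$3$2 / N$3$0"
  have "fromJ (unip_normalize N)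
      = fromJ (upper_unip a1 b1) ** fromJ N ** matrix_inv (fromJ (upper_unip a2 b2))"
    by (simp add: unip_normalize_def a1_def b1_def a2_def b2_def fromJ_mult matrix_inv_fromJ_upper_unip)
  moreover have "fromJ N \<in> cone_SO4"
    using N(1) by (simp add: SO4_cone fromJ_SO4_iff)
  ultimately show ?thesis
    using f fromJ_upper_unip_U_SO4 unfolding UU_invariant_def by simp
qed

lemma restrict_cone_unip_normalize:
  assumes "UU_invariant (restrict_cone p)" and "N \<in> SO_J" and "N $ 3 $ 0 \<noteq> 0"
  shows "restrict_cone p (fromJ (unip_normalize N)) = p (fromJ N)"
  using UU_invariant_unip_normalize[OF assms] assms(2)
  by (simp add: restrict_cone_def SO4_cone fromJ_SO4_iff)

section \<open>The invariants and the slice\<close>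

definition slice :: "complex \<Rightarrow> complex \<Rightarrow> cmat4" where
  "slice a b = fromJ (lower_unip a b)"

lemma slice_SO4: "slice a b \<in> SO4"
  by (simp add: slice_def fromJ_SO4_iff lower_unip_SO_J)

definition inv_x :: "cmat4 \<Rightarrow> complex" where
  "inv_x M = - toJ M $ 3 $ 0"

definition inv_y :: "cmat4 \<Rightarrow> complex" where
  "inv_y M = toJ M $ 2 $ 1 * toJ M $ 3 $ 0 - toJ M $ 2 $ 0 * toJ M $ 3 $ 1"

definition inv_z :: "cmat4 \<Rightarrow> complex" where
  "inv_z M = toJ M $ 1 $ 2 * toJ M $ 3 $ 0 - toJ M $ 1 $ 0 * toJ M $ 3 $ 2"

text \<open>On the cone, inv_q (c M) = c^2 for M in SO(4): it is the square of the scaling factor,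
  which the action of U x U does not change.\<close>
definition inv_q :: "cmat4 \<Rightarrow> complex" where
  "inv_q M = (\<Sum>i\<in>UNIV. \<Sum>j\<in>UNIV. M $ i $ j * M $ i $ j) / 4"

lemma invariants_slice:
  "inv_x (slice a b) = a * b" "inv_y (slice a b) = b ^ 2" "inv_z (slice a b) = a ^ 2"
  by (simp_all add: slice_def inv_x_def inv_y_def inv_z_def lower_unip_def transpose_def
      upper_unip_def distinct_4 power2_eq_square)

lemma inv_q_SO4: "M \<in> SO4 \<Longrightarrow> inv_q M = 1"
proof -
  assume "M \<in> SO4"
  then have "(transpose M ** M) $ j $ j = 1" for j
    by (simp add: SO4_def mat_def)
  moreover have "(\<Sum>i\<in>UNIV. \<Sum>j\<in>UNIV. M $ i $ j * M $ i $ j) = (\<Sum>j\<in>UNIV. (transpose M ** M) $ j $ j)"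
    by (subst sum.swap) (simp add: matrix_matrix_mult_def transpose_def)
  ultimately show ?thesis
    by (simp add: inv_q_def sum_UNIV_4)
qed

lemma hom_polys_toJ_entry: "(\<lambda>M. toJ M $ r $ s) \<in> hom_polys 1"
proof -
  have "(\<lambda>M. \<Sum>k\<in>UNIV. Pmat_inv $ r $ k * (\<Sum>l\<in>UNIV. Pmat $ l $ s * M $ k $ l)) \<in> hom_polys 1"
    by (intro hom_polys_sum hom_polys_entry)
  moreover have "toJ M $ r $ s = (\<Sum>k\<in>UNIV. Pmat_inv $ r $ k * (\<Sum>l\<in>UNIV. Pmat $ l $ s * M $ k $ l))" for M
    by (simp add: toJ_def matrix_mult3_entry sum_distrib_left mult_ac)
  ultimately show ?thesis
    by simp
qed

lemma hom_polys_invariants: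
  "inv_x \<in> hom_polys 1" "inv_y \<in> hom_polys 2" "inv_z \<in> hom_polys 2" "inv_q \<in> hom_polys 2"
proof -
  show "inv_x \<in> hom_polys 1"
    using hom_polys_fscale[OF hom_polys_toJ_entry, of "-1" 3 0] by (simp add: inv_x_def[abs_def] fscale_def)
  show "inv_y \<in> hom_polys 2" "inv_z \<in> hom_polys 2"
    unfolding inv_y_def[abs_def] inv_z_def[abs_def] one_add_one[symmetric]
    by (intro hom_polys_diff hom_polys_mult hom_polys_toJ_entry)+
  have "(\<lambda>M. \<Sum>i\<in>UNIV. 1/4 * (\<Sum>j\<in>UNIV. 1 * (M $ i $ j * M $ i $ j))) \<in> hom_polys (1 + 1)"
    by (intro hom_polys_sum hom_polys_mult hom_polys_entry)
  then show "inv_q \<in> hom_polys 2"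
    by (simp add: inv_q_def[abs_def] sum_distrib_left sum_divide_distrib mult.commute numeral_2_eq_2)
qed

lemma upper_unip_sandwich_invariants:
  fixes N :: cmat4 and a b c d :: complex
  defines "N' \<equiv> upper_unip a b ** N ** upper_unip c d"
  shows "N' $ 3 $ 0 = N $ 3 $ 0"
    and "N' $ 2 $ 1 * N' $ 3 $ 0 - N' $ 2 $ 0 * N' $ 3 $ 1 = N $ 2 $ 1 * N $ 3 $ 0 - N $ 2 $ 0 * N $ 3 $ 1"
    and "N' $ 1 $ 2 * N' $ 3 $ 0 - N' $ 1 $ 0 * N' $ 3 $ 2 = N $ 1 $ 2 * N $ 3 $ 0 - N $ 1 $ 0 * N $ 3 $ 2"
proof -
  have entries: "N' $ 3 $ 0 = N $ 3 $ 0"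
    "N' $ 2 $ 0 = N $ 2 $ 0 - a * N $ 3 $ 0"
    "N' $ 3 $ 1 = c * N $ 3 $ 0 + N $ 3 $ 1"
    "N' $ 2 $ 1 = c * (N $ 2 $ 0 - a * N $ 3 $ 0) + N $ 2 $ 1 - a * N $ 3 $ 1"
    "N' $ 1 $ 0 = N $ 1 $ 0 - b * N $ 3 $ 0"
    "N' $ 3 $ 2 = d * N $ 3 $ 0 + N $ 3 $ 2"
    "N' $ 1 $ 2 = d * (N $ 1 $ 0 - b * N $ 3 $ 0) + N $ 1 $ 2 - b * N $ 3 $ 2"
    by (simp_all add: N'_def matrix_mult3_entry sum_UNIV_4 upper_unip_def distinct_4 algebra_simps)
  then show "N' $ 3 $ 0 = N $ 3 $ 0"
    and "N' $ 2 $ 1 * N' $ 3 $ 0 - N' $ 2 $ 0 * N' $ 3 $ 1 = N $ 2 $ 1 * N $ 3 $ 0 - N $ 2 $ 0 * N $ 3 $ 1"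
    and "N' $ 1 $ 2 * N' $ 3 $ 0 - N' $ 1 $ 0 * N' $ 3 $ 2 = N $ 1 $ 2 * N $ 3 $ 0 - N $ 1 $ 0 * N $ 3 $ 2"
    unfolding entries by (simp_all add: algebra_simps)
qed

lemma invariants_U_action:
  assumes "g \<in> U_SO4" and "h \<in> U_SO4"
  shows "inv_x (g ** M ** matrix_inv h) = inv_x M"
    and "inv_y (g ** M ** matrix_inv h) = inv_y M"
    and "inv_z (g ** M ** matrix_inv h) = inv_z M"
proof -
  obtain a1 b1 a2 b2 where g: "g = fromJ (upper_unip a1 b1)" and h: "h = fromJ (upper_unip a2 b2)"
    using assms unfolding U_SO4_eq by blast
  show "inv_x (g ** M ** matrix_inv h) = inv_x M"
    by (simp only: g h inv_x_def toJ_U_action upper_unip_sandwich_invariants(1))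
  show "inv_y (g ** M ** matrix_inv h) = inv_y M"
    by (simp only: g h inv_y_def toJ_U_action upper_unip_sandwich_invariants(2))
  show "inv_z (g ** M ** matrix_inv h) = inv_z M"
    by (simp only: g h inv_z_def toJ_U_action upper_unip_sandwich_invariants(3))
qed

lemma inv_q_smat: "inv_q (smat c M) = c ^ 2 * inv_q M"
  by (rule hom_polys_smat[OF hom_polys_invariants(4)])

lemma inv_q_U_action:
  assumes "g \<in> U_SO4" and "h \<in> U_SO4" and "M \<in> cone_SO4"
  shows "inv_q (g ** M ** matrix_inv h) = inv_q M"
proof -
  obtain c M' where M: "M = smat c M'" "M' \<in> SO4"
    using assms(3) cone_SO4_iff by blast
  then have "g ** M ** matrix_inv h = smat c (g ** M' ** matrix_inv h)"
    by (simp add: matrix_mult_smat)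
  moreover have "g ** M' ** matrix_inv h \<in> SO4"
    using assms(1,2) M(2) by (rule U_action_SO4)
  ultimately show ?thesis
    using M by (simp add: inv_q_smat inv_q_SO4)
qed

definition inv_index :: "nat \<Rightarrow> (nat \<times> nat) set" where
  "inv_index d = {(n, m). n \<le> d \<and> m \<le> d \<and> even (d - n) \<and> even (d - m)}"

definition inv_basis :: "nat \<Rightarrow> nat \<Rightarrow> nat \<Rightarrow> cmat4 \<Rightarrow> complex" where
  "inv_basis d n m M = inv_x M ^ min n m * inv_y M ^ ((m - min n m) div 2)
     * inv_z M ^ ((n - min n m) div 2) * inv_q M ^ ((d - max n m) div 2)"

lemma finite_inv_index: "finite (inv_index d)"
  by (rule finite_subset[of _ "{..d} \<times> {..d}"]) (auto simp: inv_index_def)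

lemma inv_index_subset: "inv_index d \<subseteq> {..d} \<times> {..d}"
  by (auto simp: inv_index_def)

lemma card_inv_index: "card (inv_index d) = (d div 2 + 1) ^ 2"
proof -
  have half: "{n. n \<le> d \<and> even (d - n)} = (\<lambda>k. d - 2 * k) ` {..d div 2}"
  proof (intro set_eqI iffI)
    fix n
    assume "n \<in> {n. n \<le> d \<and> even (d - n)}"
    then have "n \<le> d" and "even (d - n)"
      by auto
    from \<open>even (d - n)\<close> obtain k where "d - n = 2 * k"
      by (rule evenE)
    with \<open>n \<le> d\<close> show "n \<in> (\<lambda>k. d - 2 * k) ` {..d div 2}"
      by (intro image_eqI[of _ _ k]) auto
  qed auto
  have "inj_on (\<lambda>k. d - 2 * k) {..d div 2}"
    by (rule inj_onI) auto
  then have "card {n. n \<le> d \<and> even (d - n)} = d div 2 + 1"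
    unfolding half by (simp add: card_image)
  moreover have "inv_index d = {n. n \<le> d \<and> even (d - n)} \<times> {n. n \<le> d \<and> even (d - n)}"
    by (auto simp: inv_index_def)
  ultimately show ?thesis
    by (simp add: card_cartesian_product power2_eq_square)
qed

lemma inv_basis_hom_polys:
  assumes "(n, m) \<in> inv_index d"
  shows "inv_basis d n m \<in> hom_polys d"
proof -
  have "min n m * 1 + (m - min n m) div 2 * 2 + (n - min n m) div 2 * 2 + (d - max n m) div 2 * 2 = d"
    using assms unfolding inv_index_def by (auto simp: min_def max_def; presburger)
  moreover have "(\<lambda>M. inv_x M ^ min n m * inv_y M ^ ((m - min n m) div 2)
     * inv_z M ^ ((n - min n m) div 2) * inv_q M ^ ((d - max n m) div 2))
    \<in> hom_polys (min n m * 1 + (m - min n m) div 2 * 2 + (n - min n m) div 2 * 2 + (d - max n m) div 2 * 2)"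
    by (intro hom_polys_mult hom_polys_power hom_polys_invariants)
  ultimately show ?thesis
    by (simp add: inv_basis_def[abs_def])
qed

lemma inv_basis_U_action:
  assumes "g \<in> U_SO4" and "h \<in> U_SO4" and "M \<in> cone_SO4"
  shows "inv_basis d n m (g ** M ** matrix_inv h) = inv_basis d n m M"
  using assms by (simp add: inv_basis_def invariants_U_action inv_q_U_action)

lemma inv_basis_slice:
  assumes "(n, m) \<in> inv_index d"
  shows "inv_basis d n m (slice a b) = a ^ n * b ^ m"
proof -
  define k where "k = min n m"
  have n: "n = k + 2 * ((n - k) div 2)" and m: "m = k + 2 * ((m - k) div 2)"
    using assms unfolding inv_index_def k_def by (auto simp: min_def; presburger)+
  have "inv_basis d n m (slice a b) = (a * b) ^ k * (b ^ 2) ^ ((m - k) div 2) * (a ^ 2) ^ ((n - k) div 2)"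
    by (simp add: inv_basis_def invariants_slice inv_q_SO4[OF slice_SO4] k_def)
  also have "\<dots> = a ^ (k + 2 * ((n - k) div 2)) * b ^ (k + 2 * ((m - k) div 2))"
    by (simp add: power_add power_mult power_mult_distrib mult_ac)
  finally show ?thesis
    using n m by simp
qed

lemma restrict_cone_inv_basis: "(n, m) \<in> inv_index d \<Longrightarrow> restrict_cone (inv_basis d n m) \<in> inv_deg d"
  unfolding inv_deg_iff UU_invariant_def restrict_cone_def
  using inv_basis_hom_polys by (auto simp: U_action_cone inv_basis_U_action)

definition inv_basis_cone :: "nat \<Rightarrow> nat \<times> nat \<Rightarrow> cmat4 \<Rightarrow> complex" where
  "inv_basis_cone d k = restrict_cone (inv_basis d (fst k) (snd k))"

lemma inv_basis_cone_inv_deg: "k \<in> inv_index d \<Longrightarrow> inv_basis_cone d k \<in> inv_deg d"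
  using restrict_cone_inv_basis[of "fst k" "snd k" d] by (simp add: inv_basis_cone_def)

section \<open>Invariants are determined by their restriction to the slice\<close>

text \<open>slice (-a) b, slice a (-b) and - slice a b lie in one U x U double coset, and
  p is homogeneous of degree d.\<close>
lemma hom_polys_reflection:
  assumes p: "p \<in> hom_polys d" and inv: "UU_invariant (restrict_cone p)"
    and "a \<noteq> 0" and "b \<noteq> 0"
  shows "p (slice (- a) b) = (-1) ^ d * p (slice a b)"
    and "p (slice a (- b)) = (-1) ^ d * p (slice a b)"
proof -
  let ?f = "restrict_cone p"
  note normalize = restrict_cone_unip_normalize[OF inv]
  have SO_J: "lower_unip (- a) b \<in> SO_J" "lower_unip a (- b) \<in> SO_J" "- lower_unip a b \<in> SO_J"
    by (simp_all add: lower_unip_SO_J SO_J_uminus)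
  have entries: "lower_unip (- a) b $ 3 $ 0 \<noteq> 0" "lower_unip a (- b) $ 3 $ 0 \<noteq> 0"
    "(- lower_unip a b) $ 3 $ 0 \<noteq> 0"
    using assms(3,4) by (simp_all add: lower_unip_def transpose_def upper_unip_def distinct_4)
  have "?f (fromJ (unip_normalize (- lower_unip a b))) = p (smat (-1) (slice a b))"
    using normalize[OF SO_J(3) entries(3)] by (simp add: fromJ_uminus smat_minus_one slice_def)
  also have "\<dots> = (-1) ^ d * p (slice a b)"
    by (rule hom_polys_smat[OF p])
  finally have minus: "?f (fromJ (unip_normalize (- lower_unip a b))) = (-1) ^ d * p (slice a b)" .
  show "p (slice (- a) b) = (-1) ^ d * p (slice a b)"
    using normalize[OF SO_J(1) entries(1)] minus
    unfolding unip_normalize_lower_unip_minus(1)[OF assms(3,4)] slice_def by simp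
  show "p (slice a (- b)) = (-1) ^ d * p (slice a b)"
    using normalize[OF SO_J(2) entries(2)] minus
    unfolding unip_normalize_lower_unip_minus(2)[OF assms(3,4)] slice_def by simp
qed

lemma invariant_slice_coeffs:
  assumes p: "p \<in> hom_polys d" and inv: "UU_invariant (restrict_cone p)"
    and Q: "bidegree_le Q d" "\<And>a b. p (slice a b) = poly2 Q a b"
    and nm: "(n, m) \<notin> inv_index d"
  shows "coeff (coeff Q n) m = 0"
proof (cases "n \<le> d \<and> m \<le> d")
  case True
  have "coeff (coeff Q n) m * ((-1) ^ n - (-1) ^ d) = 0"
    using hom_polys_reflection(1)[OF p inv] Q by (intro poly2_reflection_fst_coeffs[OF Q(1)]) simp
  moreover have "coeff (coeff Q n) m * ((-1) ^ m - (-1) ^ d) = 0"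
    using hom_polys_reflection(2)[OF p inv] Q by (intro poly2_reflection_snd_coeffs[OF Q(1)]) simp
  moreover have "odd (d - n) \<or> odd (d - m)"
    using True nm by (auto simp: inv_index_def)
  ultimately show ?thesis
    using True minus_one_power_ne[of n d] minus_one_power_ne[of m d] by auto
next
  case False
  then show ?thesis
    using Q(1) bidegree_le_coeff_eq_0 by (meson not_le)
qed

lemma invariant_slice_expansion:
  assumes p: "p \<in> hom_polys d" and inv: "UU_invariant (restrict_cone p)"
    and Q: "bidegree_le Q d" "\<And>a b. p (slice a b) = poly2 Q a b"
  shows "p (slice a b)
    = (\<Sum>k\<in>inv_index d. coeff (coeff Q (fst k)) (snd k) * inv_basis d (fst k) (snd k) (slice a b))"
proof -
  have "(\<Sum>k\<in>inv_index d. coeff (coeff Q (fst k)) (snd k) * inv_basis d (fst k) (snd k) (slice a b))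
      = (\<Sum>k\<in>inv_index d. coeff (coeff Q (fst k)) (snd k) * a ^ fst k * b ^ snd k)"
    by (simp add: inv_basis_slice mult.assoc)
  also have "\<dots> = (\<Sum>n\<le>d. \<Sum>m\<le>d. coeff (coeff Q n) m * a ^ n * b ^ m)"
    by (rule sum_square_eq_sum_subset[OF inv_index_subset, symmetric])
      (simp add: invariant_slice_coeffs[OF p inv Q])
  finally show ?thesis
    by (simp add: Q(2) poly2_eq_sum[OF Q(1)])
qed

lemma invariant_vanishing_on_slice_generic:
  assumes inv: "UU_invariant (restrict_cone p)"
    and zero: "\<And>a b. a \<noteq> 0 \<Longrightarrow> b \<noteq> 0 \<Longrightarrow> p (slice a b) = 0"
    and N: "N \<in> SO_J" "N $ 3 $ 0 \<noteq> 0"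
  shows "p (fromJ N) = 0"
proof -
  obtain a b where ab: "a \<noteq> 0" "b \<noteq> 0" and eq: "unip_normalize N = unip_normalize (lower_unip a b)"
    using SO_J_orbit_meets_lower_unip[OF N] .
  have "lower_unip a b $ 3 $ 0 \<noteq> 0"
    using ab by (simp add: lower_unip_def transpose_def upper_unip_def distinct_4)
  then have "p (fromJ N) = p (slice a b)"
    using restrict_cone_unip_normalize[OF inv] N lower_unip_SO_J by (metis eq slice_def)
  then show ?thesis
    using zero ab by simp
qed

text \<open>Off the open set where the (3,0) entry is nonzero, N is reached along the biaffine
  family lower_unip a b ** N: there p is a polynomial Q in (a, b) with Q * G = 0, where G is
  the (3,0) entry of the family, which is a nonzero polynomial.\<close>
lemma invariant_vanishing_on_slice_SO_J:
  assumes p: "p \<in> hom_polys d" and inv: "UU_invariant (restrict_cone p)"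
    and zero: "\<And>a b. a \<noteq> 0 \<Longrightarrow> b \<noteq> 0 \<Longrightarrow> p (slice a b) = 0"
    and N: "N \<in> SO_J"
  shows "p (fromJ N) = 0"
proof -
  have family: "fromJ (lower_unip a b ** N) = Pmat ** lower_unip a b ** (N ** Pmat_inv)" for a b
    by (simp add: fromJ_def matrix_mul_assoc)
  obtain Q where Q: "bidegree_le Q d" "\<And>a b. p (fromJ (lower_unip a b ** N)) = poly2 Q a b"
    using hom_polys_comp_biaffine[OF _ p, of "\<lambda>a b. fromJ (lower_unip a b ** N)"]
    unfolding family using biaffine_lower_unip_entry by blast
  have "biaffine (\<lambda>a b. (lower_unip a b ** N) $ 3 $ 0)"
    using biaffine_lower_unip_entry[of "mat 1" N 3 0] by simp
  then obtain G where G: "bidegree_le G 1" "\<And>a b. (lower_unip a b ** N) $ 3 $ 0 = poly2 G a b"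
    unfolding biaffine_def by auto
  have "G \<noteq> 0"
    using SO_J_lower_unip_mult_entry_30_nonzero[OF N] G(2) by (metis poly2_def poly_0)
  have "poly2 (Q * G) a b = 0" for a b
  proof (cases "poly2 G a b = 0")
    case False
    then have "p (fromJ (lower_unip a b ** N)) = 0"
      using G(2) N by (intro invariant_vanishing_on_slice_generic[OF inv zero])
        (simp_all add: SO_J_mult lower_unip_SO_J)
    then show ?thesis
      by (simp add: poly2_mult Q(2)[symmetric])
  qed (simp add: poly2_mult)
  then have "Q * G = 0"
    using bidegree_le_mult[OF Q(1) G(1)] by (intro poly2_eq_0_if_vanishing) auto
  then have "Q = 0"
    using \<open>G \<noteq> 0\<close> by simp
  then show ?thesis
    using Q(2)[of 0 0] by (simp add: lower_unip_def upper_unip_zero poly2_def)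
qed

lemma invariant_vanishing_on_slice:
  assumes p: "p \<in> hom_polys d" and inv: "UU_invariant (restrict_cone p)"
    and zero: "\<And>a b. a \<noteq> 0 \<Longrightarrow> b \<noteq> 0 \<Longrightarrow> p (slice a b) = 0"
    and M: "M \<in> cone_SO4"
  shows "p M = 0"
proof -
  obtain c M' where M': "M = smat c M'" "M' \<in> SO4"
    using M cone_SO4_iff by blast
  have "p M' = 0"
    using invariant_vanishing_on_slice_SO_J[OF p inv zero, of "toJ M'"] M'(2) SO4_iff_SO_J by simp
  then show ?thesis
    using M'(1) hom_polys_smat[OF p] by simp
qed

section \<open>The dimension of the invariants\<close>

lemma inv_deg_subset_span: "inv_deg d \<subseteq> fs.span (inv_basis_cone d ` inv_index d)"
proof
  fix f
  assume "f \<in> inv_deg d"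
  then obtain p where p: "p \<in> hom_polys d" and f: "f = restrict_cone p" and inv: "UU_invariant f"
    by (auto simp: inv_deg_iff)
  obtain Q where Q: "bidegree_le Q d" "\<And>a b. p (slice a b) = poly2 Q a b"
    using hom_polys_comp_biaffine[OF _ p, of slice] biaffine_lower_unip_entry
    unfolding slice_def fromJ_def by blast
  define c where "c k = coeff (coeff Q (fst k)) (snd k)" for k
  define q where "q M = (\<Sum>k\<in>inv_index d. c k * inv_basis d (fst k) (snd k) M)" for M
  define g where "g M = (\<Sum>k\<in>inv_index d. c k * inv_basis_cone d k M)" for M
  have g: "g \<in> fs.span (inv_basis_cone d ` inv_index d)"
    unfolding g_def[abs_def] by (rule lincomb_in_span)
  have "UU_invariant v" if "v \<in> inv_basis_cone d ` inv_index d" for v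
    using that inv_basis_cone_inv_deg inv_deg_iff by blast
  then have "UU_invariant g"
    using UU_invariant_span g by blast
  have h: "(\<lambda>M. p M - q M) \<in> hom_polys d"
    unfolding q_def by (intro hom_polys_diff p hom_polys_sum inv_basis_hom_polys) simp
  have restrict: "restrict_cone (\<lambda>M. p M - q M) = (\<lambda>M. f M - g M)"
    by (simp add: fun_eq_iff restrict_cone_def f q_def g_def inv_basis_cone_def sum_distrib_left)
  have "q (slice a b) = p (slice a b)" for a b
    using invariant_slice_expansion[OF p inv[unfolded f] Q] by (simp add: q_def c_def)
  moreover have "UU_invariant (restrict_cone (\<lambda>M. p M - q M))"
    unfolding restrict using inv \<open>UU_invariant g\<close> by (rule UU_invariant_diff)
  ultimately have "p M - q M = 0" if "M \<in> cone_SO4" for M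
    using invariant_vanishing_on_slice[OF h _ _ that] by simp
  then have "f = g"
    by (auto simp: fun_eq_iff f g_def q_def inv_basis_cone_def restrict_cone_def sum_distrib_left)
  then show "f \<in> fs.span (inv_basis_cone d ` inv_index d)"
    using g by simp
qed

lemma inv_basis_cone_independent:
  assumes "(\<Sum>k\<in>inv_index d. fscale (c k) (inv_basis_cone d k)) = 0"
  shows "\<forall>k\<in>inv_index d. c k = 0"
proof
  fix k
  assume k: "k \<in> inv_index d"
  show "c k = 0"
  proof (rule sum_subset_square_powers_eq_0_imp_coeff_eq_0[OF inv_index_subset _ k])
    fix a b :: complex
    have "(\<Sum>k\<in>inv_index d. c k * a ^ fst k * b ^ snd k)
        = (\<Sum>k\<in>inv_index d. fscale (c k) (inv_basis_cone d k)) (slice a b)"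
      by (simp add: sum_apply fscale_apply inv_basis_cone_def restrict_cone_def SO4_cone[OF slice_SO4]
          inv_basis_slice mult.assoc)
    then show "(\<Sum>k\<in>inv_index d. c k * a ^ fst k * b ^ snd k) = 0"
      using assms by simp
  qed
qed

lemma dim_inv_deg: "vector_space.dim fscale (inv_deg d) = (d div 2 + 1) ^ 2"
proof -
  have basis: "inv_basis_cone d ` inv_index d \<subseteq> inv_deg d"
    using inv_basis_cone_inv_deg by auto
  have "fs.span (inv_deg d) = fs.span (inv_basis_cone d ` inv_index d)"
    using fs.span_mono[OF basis] fs.span_mono[OF inv_deg_subset_span[of d]]
    by (simp add: fs.span_span subset_antisym)
  then have "fs.dim (inv_deg d) = fs.dim (inv_basis_cone d ` inv_index d)"
    by (metis fs.dim_span)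
  also have "\<dots> = card (inv_index d)"
    using finite_inv_index inv_basis_cone_independent by (rule fs.dim_image_eq_card)
  finally show ?thesis
    by (simp add: card_inv_index)
qed

theorem proposition5p2:
  shows "hilbert_series_inv =
           (1 + fps_X ^ 2) / ((1 - fps_X) * (1 - fps_X ^ 2) ^ 2)"
  unfolding hilbert_series_inv_def dim_inv_deg fps_div2_succ_square_eq[symmetric] by simp

end
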